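(* Let $\mathcal A$ be a finite alphabet. For each type $\diamond\in\{0,*,\omega,\infty\}$ take the monad $T$, endofunctor $F$ on $\mathbf{Meas}$ and measurable space $\Omega$ as follows: type $0$: $T=\mathbb S$, $F=\mathcal A\times\mathrm{Id}$, $\Omega=(\emptyset,\{\emptyset\})$; type $*$: $T=\mathbb S$, $F=\mathcal A\times\mathrm{Id}+\mathbf 1$, $\Omega=(\mathcal A^*,\sigma(\mathcal S_* ))$; type $\omega$: $T=\mathbb P$, $F=\mathcal A\times\mathrm{Id}$, $\Omega=(\mathcal A^\omega,\sigma(\mathcal S_\omega))$; type $\infty$: $T=\mathbb P$, $F=\mathcal A\times\mathrm{Id}+\mathbf 1$, $\Omega=(\mathcal A^\infty,\sigma(\mathcal S_\infty))$. Let $\overline F$ be the lifting of $F$ to $\mathcal{K}\ell(T)$ induced by the distributive law $\lambda$ below, and let $\kappa=\eta_{F\Omega}\circ\phi$, where for $\diamond\in\{*,\omega,\infty\}$, $\phi$ is the restriction of $\phi:\mathcal A^\infty\to\mathcal A\times\mathcal A^\infty+\mathbf 1$, $\epsilon\mapsto\checkmark$, $au\mapsto(a,u)$ to $\Omega$ (with codomain $\phi(\Omega)=F\Omega$), and for $\diamond=0$, $\phi:\emptyset\to\mathcal A\times\emptyset$ is the empty function. Then $(\Omega,\kappa)$ is a final $\overline F$-coalgebra in $\mathcal{K}\ell(T)$. Moreover, a $\diamond$-PTS $(\mathcal A,X,\alpha)$ is exactly an $\overline F$-coalgebra $(X,\alpha)$ in $\mathcal{K}\ell(T)$, and the unique $\overline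 F$-coalgebra homomorphism from $(X,\alpha)$ to $(\Omega,\kappa)$ is the trace map $\mathbf{tr}:X\to T\Omega$, $x\mapsto\mathbf{tr}(x)$ (the unique extension to $\sigma(\mathcal S_\diamond)$ of the trace pre-measure defined in the context).
   Context: $\mathbf{Meas}$ is the category of measurable spaces and measurable maps. $\mathbf 1=\{\checkmark\}$. Products $X\times Y$ carry the product $\sigma$-algebra, disjoint unions $X+Y$ carry $\{S_X+S_Y: S_X\in\Sigma_X,S_Y\in\Sigma_Y\}$; $\mathcal A$ carries $\mathcal P(\mathcal A)$. For a measurable space $X$, $\mathbb S(X)$ (resp. $\mathbb P(X)$) is the set of sub-probability (resp. probability) measures on $\Sigma_X$, with the smallest $\sigma$-algebra making all evaluation maps $p_S(P)=P(S)$, $S\in\Sigma_X$, Borel measurable; for measurable $f$, $T(f)(P)=P\circ f^{-1}$. Unit $\eta_X(x)=\delta_x$ (Dirac measure), multiplication $\mu_X(P)(S)=\int p_S\,dP$. The Kleisli category $\mathcal{K}\ell(T)$ has measurable spaces as objects, arrows $X\to Y$ are measurable maps $X\to TY$, composition $g\circ_T f=\mu_Z\circ T(g)\circ f$, identities $\eta_X$. Given a distributive law $\lambda:FT\Rightarrow TF$, the lifting $\overline F$ acts as $F$ on objects and as $\overline F(f)=\lambda_Y\circ F(f)$ on Kleisli arrows $f:X\to TY$. An $\overline F$-coalgebra is $(X,\alpha)$ with $\alpha:X\to TFX$ measurable; a homomorphism $(X,\alpha)\to(Y,\beta)$ is a Kleisli arrow $h$ with $\beta\circ_T h=\overline F(h)\circ_T\alpha$;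 final means every coalgebra has exactly one homomorphism into it. The distributive laws: for $F=\mathcal A\times\mathrm{Id}$, $\lambda_X(a,P)=\delta_a\otimes P$ (product measure); for $F=\mathcal A\times\mathrm{Id}+\mathbf 1$, $\lambda_X(a,P)=\delta_a\odot P$ where $(\delta_a\odot P)(S)=(\delta_a\otimes P)(S\cap(\mathcal A\times X))$, and $\lambda_X(\checkmark)=\delta_\checkmark$. Words: $\mathcal A^*$ finite words, $\mathcal A^\omega$ infinite words, $\mathcal A^\infty=\mathcal A^*\cup\mathcal A^\omega$, $\sqsubseteq$ the prefix relation. For $u\in\mathcal A^*$: $C_\omega(u)=\{v\in\mathcal A^\omega:u\sqsubseteq v\}$, $C_\infty(u)=\{v\in\mathcal A^\infty:u\sqsubseteq v\}$. $\mathcal S_0=\{\emptyset\}$, $\mathcal S_*=\{\emptyset\}\cup\{\{u\}:u\in\mathcal A^*\}$, $\mathcal S_\omega=\{\emptyset\}\cup\{C_\omega(u):u\in\mathcal A^*\}$, $\mathcal S_\infty=\{\emptyset\}\cup\{\{u\}:u\in\mathcal A^*\}\cup\{C_\infty(u):u\in\mathcal A^*\}$. A PTS of type $\diamond$ is $(\mathcal A,X,\alpha)$ with $X$ a measurable space and $\alpha$ a measurable map $X\to\mathbb S(\mathcal A\times X)$ (type $0$), $X\to\mathbb S(\mathcal A\times X+\mathbf 1)$ (type $*$), $X\to\mathbb P(\mathcal A\times X)$ (type $\omega$), $X\to\mathbb P(\mathcal A\times X+\mathbf 1)$ (type $\infty$). Put $\mathbf P_a(x,S)=\alpha(x)(\{a\}\times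 S)$. The trace pre-measure $\mathbf{tr}(x):\mathcal S_\diamond\to[0,1]$ is defined by $\mathbf{tr}(x)(\emptyset)=0$; for $\diamond\in\{*,\infty\}$: $\mathbf{tr}(x)(\{\epsilon\})=\alpha(x)(\mathbf 1)$ and $\mathbf{tr}(x)(\{au\})=\int_{x'\in X}\mathbf{tr}(x')(\{u\})\,d\mathbf P_a(x,x')$; for $\diamond\in\{\omega,\infty\}$: $\mathbf{tr}(x)(C_\diamond(\epsilon))=1$ and $\mathbf{tr}(x)(C_\diamond(au))=\int_{x'\in X}\mathbf{tr}(x')(C_\diamond(u))\,d\mathbf P_a(x,x')$, for all $a\in\mathcal A,u\in\mathcal A^*$. *)

theory Defs
  imports "HOL-Probability.Probability" "HOL-Library.Stream"
begin

definition SP :: "'a measure \<Rightarrow> 'a measure measure" where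
  "SP K = (SUP A \<in> sets K. vimage_algebra
      {M. sets M = sets K \<and> emeasure M (space M) \<le> 1} (\<lambda>M. emeasure M A) borel)"

definition PP :: "'a measure \<Rightarrow> 'a measure measure" where
  "PP K = (SUP A \<in> sets K. vimage_algebra
      {M. sets M = sets K \<and> emeasure M (space M) = 1} (\<lambda>M. emeasure M A) borel)"

definition kmu :: "'c measure \<Rightarrow> 'c measure measure \<Rightarrow> 'c measure" where
  "kmu Z Q = measure_of (space Z) (sets Z) (\<lambda>S. \<integral>\<^sup>+ M. emeasure M S \<partial>Q)"

text \<open>Kleisli composition g o_T f = mu_Z o T(g) o f, with T(g)(P) = P o g^{-1};
  TZ is the measurable space T Z.\<close>
definition kcomp :: "'c measure measure \<Rightarrow> 'c measure \<Rightarrow> ('b \<Rightarrow> 'c measure)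
    \<Rightarrow> ('a \<Rightarrow> 'b measure) \<Rightarrow> 'a \<Rightarrow> 'c measure" where
  "kcomp TZ Z g f = (\<lambda>x. kmu Z (distr (f x) TZ g))"

abbreviation Alph :: "'a measure" where "Alph \<equiv> count_space UNIV"

definition sum_meas :: "'a measure \<Rightarrow> 'b measure \<Rightarrow> ('a + 'b) measure" where
  "sum_meas M N = measure_of (Inl ` space M \<union> Inr ` space N)
     {Inl ` A \<union> Inr ` B | A B. A \<in> sets M \<and> B \<in> sets N} (\<lambda>_. 0)"

text \<open>The one-point space 1 = {check}, represented by unit.\<close>
abbreviation One :: "unit measure" where "One \<equiv> count_space UNIV"

definition Fp :: "'x measure \<Rightarrow> ('a::finite \<times> 'x) measure" where
  "Fp X = Alph \<Otimes>\<^sub>M X"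

definition Fs :: "'x measure \<Rightarrow> (('a::finite \<times> 'x) + unit) measure" where
  "Fs X = sum_meas (Alph \<Otimes>\<^sub>M X) One"

definition lam_p :: "'a::finite \<times> 'y measure \<Rightarrow> ('a \<times> 'y) measure" where
  "lam_p p = return Alph (fst p) \<Otimes>\<^sub>M snd p"

definition Fmap_p :: "('x \<Rightarrow> 'z) \<Rightarrow> 'a \<times> 'x \<Rightarrow> 'a \<times> 'z" where
  "Fmap_p h p = (fst p, h (snd p))"

definition lift_p :: "('x \<Rightarrow> 'y measure) \<Rightarrow> ('a::finite \<times> 'x) \<Rightarrow> ('a \<times> 'y) measure" where
  "lift_p h = (\<lambda>p. lam_p (Fmap_p h p))"

definition lam_s :: "'y measure \<Rightarrow> ('a::finite \<times> 'y measure) + unit \<Rightarrow> (('a \<times> 'y) + unit) measure" where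
  "lam_s Y q = (case q of
      Inl p \<Rightarrow> distr (return Alph (fst p) \<Otimes>\<^sub>M snd p) (Fs Y) Inl
    | Inr _ \<Rightarrow> return (Fs Y) (Inr ()))"

definition Fmap_s :: "('x \<Rightarrow> 'z) \<Rightarrow> ('a \<times> 'x) + unit \<Rightarrow> ('a \<times> 'z) + unit" where
  "Fmap_s h q = (case q of Inl p \<Rightarrow> Inl (fst p, h (snd p)) | Inr u \<Rightarrow> Inr u)"

definition lift_s :: "'y measure \<Rightarrow> ('x \<Rightarrow> 'y measure) \<Rightarrow> (('a::finite \<times> 'x) + unit) \<Rightarrow> (('a \<times> 'y) + unit) measure" where
  "lift_s Y h = (\<lambda>q. lam_s Y (Fmap_s h q))"

text \<open>TY = T Y, FY = F Y, TFY = T (F Y), lift = the lifting of F applied to arrows into Y.\<close>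
definition is_hom :: "'y measure measure \<Rightarrow> 'fy measure \<Rightarrow> 'fy measure measure
    \<Rightarrow> (('x \<Rightarrow> 'y measure) \<Rightarrow> 'fx \<Rightarrow> 'fy measure)
    \<Rightarrow> 'x measure \<Rightarrow> ('x \<Rightarrow> 'fx measure) \<Rightarrow> ('y \<Rightarrow> 'fy measure) \<Rightarrow> ('x \<Rightarrow> 'y measure) \<Rightarrow> bool" where
  "is_hom TY FY TFY lift X \<alpha> \<beta> h \<longleftrightarrow>
     h \<in> measurable X TY \<and>
     (\<forall>x\<in>space X. kcomp TFY FY \<beta> h x = kcomp TFY FY (lift h) \<alpha> x)"

datatype 'a iword = Fin "'a list" | Inf "'a stream"

definition prefix_s :: "'a list \<Rightarrow> 'a stream \<Rightarrow> bool" where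
  "prefix_s u v \<longleftrightarrow> stake (length u) v = u"

fun prefix_i :: "'a list \<Rightarrow> 'a iword \<Rightarrow> bool" where
  "prefix_i u (Fin w) \<longleftrightarrow> prefix u w"
| "prefix_i u (Inf s) \<longleftrightarrow> prefix_s u s"

definition C_omega :: "'a list \<Rightarrow> 'a stream set" where
  "C_omega u = {v. prefix_s u v}"

definition C_inf :: "'a list \<Rightarrow> 'a iword set" where
  "C_inf u = {v. prefix_i u v}"

definition S_star :: "'a list set set" where
  "S_star = {{}} \<union> {{u} | u. True}"

definition S_omega :: "'a stream set set" where
  "S_omega = {{}} \<union> {C_omega u | u. True}"

definition S_inf :: "'a iword set set" where
  "S_inf = {{}} \<union> {{Fin u} | u. True} \<union> {C_inf u | u. True}"

text \<open>Type 0: the empty measurable space (carrier type unit, empty space).\<close>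
definition Omega0 :: "unit measure" where "Omega0 = sigma {} {{}}"
definition Omega_star :: "'a list measure" where "Omega_star = sigma UNIV S_star"
definition Omega_omega :: "'a stream measure" where "Omega_omega = sigma UNIV S_omega"
definition Omega_inf :: "'a iword measure" where "Omega_inf = sigma UNIV S_inf"

definition phi0 :: "unit \<Rightarrow> 'a \<times> unit" where "phi0 = (\<lambda>_. undefined)"

fun phi_star :: "'a list \<Rightarrow> ('a \<times> 'a list) + unit" where
  "phi_star [] = Inr ()"
| "phi_star (a # u) = Inl (a, u)"

definition phi_omega :: "'a stream \<Rightarrow> 'a \<times> 'a stream" where
  "phi_omega s = (shd s, stl s)"

fun phi_inf :: "'a iword \<Rightarrow> ('a \<times> 'a iword) + unit" where
  "phi_inf (Fin []) = Inr ()"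
| "phi_inf (Fin (a # u)) = Inl (a, Fin u)"
| "phi_inf (Inf s) = Inl (shd s, Inf (stl s))"

definition kappa0 :: "unit \<Rightarrow> ('a::finite \<times> unit) measure" where
  "kappa0 w = return (Fp Omega0) (phi0 w)"
definition kappa_star :: "'a::finite list \<Rightarrow> (('a \<times> 'a list) + unit) measure" where
  "kappa_star w = return (Fs Omega_star) (phi_star w)"
definition kappa_omega :: "'a::finite stream \<Rightarrow> ('a \<times> 'a stream) measure" where
  "kappa_omega w = return (Fp Omega_omega) (phi_omega w)"
definition kappa_inf :: "'a::finite iword \<Rightarrow> (('a \<times> 'a iword) + unit) measure" where
  "kappa_inf w = return (Fs Omega_inf) (phi_inf w)"

definition Pa_p :: "'x measure \<Rightarrow> ('x \<Rightarrow> ('a \<times> 'x) measure) \<Rightarrow> 'a \<Rightarrow> 'x \<Rightarrow> 'x measure" where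
  "Pa_p X \<alpha> a x = measure_of (space X) (sets X) (\<lambda>S. emeasure (\<alpha> x) ({a} \<times> S))"

definition Pa_s :: "'x measure \<Rightarrow> ('x \<Rightarrow> (('a \<times> 'x) + unit) measure) \<Rightarrow> 'a \<Rightarrow> 'x \<Rightarrow> 'x measure" where
  "Pa_s X \<alpha> a x = measure_of (space X) (sets X) (\<lambda>S. emeasure (\<alpha> x) (Inl ` ({a} \<times> S)))"

text \<open>tr(x)({u}) for types * and infinity.\<close>
primrec tr_single :: "'x measure \<Rightarrow> ('x \<Rightarrow> (('a \<times> 'x) + unit) measure) \<Rightarrow> 'a list \<Rightarrow> 'x \<Rightarrow> ennreal" where
  "tr_single X \<alpha> [] x = emeasure (\<alpha> x) {Inr ()}"
| "tr_single X \<alpha> (a # u) x = (\<integral>\<^sup>+ x'. tr_single X \<alpha> u x' \<partial>(Pa_s X \<alpha> a x))"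

text \<open>tr(x)(C(u)) for type omega.\<close>
primrec tr_cyl_p :: "'x measure \<Rightarrow> ('x \<Rightarrow> ('a \<times> 'x) measure) \<Rightarrow> 'a list \<Rightarrow> 'x \<Rightarrow> ennreal" where
  "tr_cyl_p X \<alpha> [] x = 1"
| "tr_cyl_p X \<alpha> (a # u) x = (\<integral>\<^sup>+ x'. tr_cyl_p X \<alpha> u x' \<partial>(Pa_p X \<alpha> a x))"

text \<open>tr(x)(C(u)) for type infinity.\<close>
primrec tr_cyl_s :: "'x measure \<Rightarrow> ('x \<Rightarrow> (('a \<times> 'x) + unit) measure) \<Rightarrow> 'a list \<Rightarrow> 'x \<Rightarrow> ennreal" where
  "tr_cyl_s X \<alpha> [] x = 1"
| "tr_cyl_s X \<alpha> (a # u) x = (\<integral>\<^sup>+ x'. tr_cyl_s X \<alpha> u x' \<partial>(Pa_s X \<alpha> a x))"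

end

theory Submission
  imports Defs
begin

text \<open>A homomorphism \<open>h\<close> into \<open>(\<Omega>, \<kappa>)\<close> is a fixpoint \<open>h x = \<psi>\<^sub>* (\<alpha> x \<bind> \<overline>F h)\<close>, where
  \<open>\<psi>\<close> is the inverse of the isomorphism \<open>\<phi> : \<Omega> \<rightarrow> F \<Omega>\<close>. Evaluated on the generators
  \<open>{u}\<close> and \<open>C(u)\<close> of \<open>\<Omega>\<close>, the fixpoint equation is exactly the recursion defining the trace
  pre-measure, so by induction on \<open>u\<close> every homomorphism agrees with the trace on an
  intersection-stable generator, which gives uniqueness. For existence the trace pre-measure
  is realised as the image of Lebesgue measure on [0,1) under a decoding of reals into words:
  every word gets a subinterval of length its trace, nested along prefixes; this measure
  has the right values on the generators and hence satisfies the fixpoint equation.\<close>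

section \<open>The spaces S(K), P(K) and the sum of measurable spaces\<close>

lemma space_SP: "space (SP K) = {M. sets M = sets K \<and> emeasure M (space M) \<le> 1}"
  unfolding SP_def by (subst space_Sup_eq_UN) auto

lemma SP_eq_subprob_algebra:
  assumes "space K \<noteq> {}" shows "SP K = subprob_algebra K"
proof -
  have "{M. sets M = sets K \<and> emeasure M (space M) \<le> 1} = {M. subprob_space M \<and> sets M = sets K}"
    using assms by (auto dest: sets_eq_imp_space_eq subprob_space.emeasure_space_le_1 intro!: subprob_spaceI)
  then show ?thesis unfolding SP_def subprob_algebra_def by simp
qed

lemma space_PP: "space (PP K) = space (prob_algebra K)"
proof -
  have "space (PP K) = {M. sets M = sets K \<and> emeasure M (space M) = 1}"
    unfolding PP_def by (subst space_Sup_eq_UN) auto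
  then show ?thesis
    unfolding space_prob_algebra by (auto intro: prob_spaceI dest: prob_space.emeasure_space_1)
qed

lemma measurable_PP_prob_algebra: "(\<lambda>M. M) \<in> measurable (PP K) (prob_algebra K)"
proof (rule measurable_prob_algebraI)
  show "(\<lambda>M. M) \<in> measurable (PP K) (subprob_algebra K)"
  proof (rule measurable_subprob_algebra)
    fix M assume "M \<in> space (PP K)"
    then show "subprob_space M" "sets M = sets K"
      by (auto simp: space_PP space_prob_algebra prob_space_imp_subprob_space)
  next
    fix A assume A: "A \<in> sets K"
    show "(\<lambda>M. emeasure M A) \<in> borel_measurable (PP K)"
      unfolding PP_def
      by (rule measurable_Sup1[where m="vimage_algebra {M. sets M = sets K \<and> emeasure M (space M) = 1} (\<lambda>M. emeasure M A) borel"])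
         (use A in \<open>auto intro!: measurable_vimage_algebra1\<close>)
  qed
qed (auto simp: space_PP space_prob_algebra)

lemma measurable_prob_algebra_PP: "(\<lambda>M. M) \<in> measurable (prob_algebra K) (PP K)"
  unfolding PP_def
proof (rule measurable_Sup2)
  fix m assume "m \<in> (\<lambda>A. vimage_algebra {M. sets M = sets K \<and> emeasure M (space M) = 1} (\<lambda>M. emeasure M A) borel) ` sets K"
  then obtain A where A: "A \<in> sets K"
    and m: "m = vimage_algebra {M. sets M = sets K \<and> emeasure M (space M) = 1} (\<lambda>M. emeasure M A) borel"
    by auto
  show "(\<lambda>M. M) \<in> measurable (prob_algebra K) m" unfolding m
  proof (rule measurable_vimage_algebra2)
    show "(\<lambda>M. M) \<in> space (prob_algebra K) \<rightarrow> {M. sets M = sets K \<and> emeasure M (space M) = 1}"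
      by (auto simp: space_prob_algebra dest: prob_space.emeasure_space_1)
    show "(\<lambda>M. emeasure M A) \<in> borel_measurable (prob_algebra K)"
      unfolding prob_algebra_def using A by (intro measurable_restrict_space1) measurable
  qed
qed auto

lemma sets_PP: "sets (PP K) = sets (prob_algebra K)"
proof
  show "sets (PP K) \<subseteq> sets (prob_algebra K)"
  proof
    fix A assume "A \<in> sets (PP K)"
    with measurable_sets[OF measurable_prob_algebra_PP this] sets.sets_into_space[OF this] space_PP[of K]
    show "A \<in> sets (prob_algebra K)" by (simp add: Int_absorb2)
  qed
  show "sets (prob_algebra K) \<subseteq> sets (PP K)"
  proof
    fix A assume "A \<in> sets (prob_algebra K)"
    with measurable_sets[OF measurable_PP_prob_algebra this] sets.sets_into_space[OF this] space_PP[of K]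
    show "A \<in> sets (PP K)" by (simp add: Int_absorb2)
  qed
qed

lemma measurable_PP: "measurable M (PP K) = measurable M (prob_algebra K)"
  by (rule measurable_cong_sets[OF refl sets_PP])

lemma measurable_emeasure_PP: "S \<in> sets K \<Longrightarrow> (\<lambda>M. emeasure M S) \<in> borel_measurable (PP K)"
  unfolding measurable_cong_sets[OF sets_PP refl] prob_algebra_def
  by (intro measurable_restrict_space1) measurable

lemma sum_meas_generator_closed:
  "{Inl ` A \<union> Inr ` B | A B. A \<in> sets M \<and> B \<in> sets N} \<subseteq> Pow (Inl ` space M \<union> Inr ` space N)"
proof
  fix S assume "S \<in> {Inl ` A \<union> Inr ` B | A B. A \<in> sets M \<and> B \<in> sets N}"
  then obtain A B where "S = Inl ` A \<union> Inr ` B" "A \<in> sets M" "B \<in> sets N" by blast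
  then show "S \<in> Pow (Inl ` space M \<union> Inr ` space N)"
    using sets.sets_into_space[of A M] sets.sets_into_space[of B N] by blast
qed

lemma space_sum_meas: "space (sum_meas M N) = Inl ` space M \<union> Inr ` space N"
  unfolding sum_meas_def using sum_meas_generator_closed by (rule space_measure_of)

lemma sets_sum_meas: "sets (sum_meas M N) = sigma_sets (Inl ` space M \<union> Inr ` space N)
     {Inl ` A \<union> Inr ` B | A B. A \<in> sets M \<and> B \<in> sets N}"
  unfolding sum_meas_def using sum_meas_generator_closed by (rule sets_measure_of)

lemma Un_in_sets_sum_meas: "A \<in> sets M \<Longrightarrow> B \<in> sets N \<Longrightarrow> Inl ` A \<union> Inr ` B \<in> sets (sum_meas M N)"
  unfolding sets_sum_meas by (rule sigma_sets.Basic) blast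

lemma Inl_in_sets_sum_meas: "A \<in> sets M \<Longrightarrow> Inl ` A \<in> sets (sum_meas M N)"
  using Un_in_sets_sum_meas[of A M "{}" N] by simp

lemma Inr_in_sets_sum_meas: "B \<in> sets N \<Longrightarrow> Inr ` B \<in> sets (sum_meas M N)"
  using Un_in_sets_sum_meas[of "{}" M B N] by simp

lemma measurable_from_sum_meas:
  assumes f: "(\<lambda>x. f (Inl x)) \<in> measurable M K" and g: "(\<lambda>x. f (Inr x)) \<in> measurable N K"
  shows "f \<in> measurable (sum_meas M N) K"
  unfolding measurable_def
proof (intro CollectI conjI ballI)
  show "f \<in> space (sum_meas M N) \<rightarrow> space K"
    using measurable_space[OF f] measurable_space[OF g] by (auto simp: space_sum_meas)
  fix B assume B: "B \<in> sets K"
  have "f -` B \<inter> space (sum_meas M N) =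
      Inl ` ((\<lambda>x. f (Inl x)) -` B \<inter> space M) \<union> Inr ` ((\<lambda>x. f (Inr x)) -` B \<inter> space N)"
    by (auto simp: space_sum_meas)
  also have "\<dots> \<in> sets (sum_meas M N)"
    by (intro Un_in_sets_sum_meas measurable_sets[OF f B] measurable_sets[OF g B])
  finally show "f -` B \<inter> space (sum_meas M N) \<in> sets (sum_meas M N)" .
qed

lemma measurable_to_sum_meas:
  assumes "f \<in> space K \<rightarrow> Inl ` space M \<union> Inr ` space N"
    and "\<And>A B. A \<in> sets M \<Longrightarrow> B \<in> sets N \<Longrightarrow> f -` (Inl ` A \<union> Inr ` B) \<inter> space K \<in> sets K"
  shows "f \<in> measurable K (sum_meas M N)"
  unfolding sum_meas_def
  by (rule measurable_measure_of[OF sum_meas_generator_closed assms(1)]) (auto intro: assms(2))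

lemma measurable_Inl_sum_meas: "Inl \<in> measurable M (sum_meas M N)"
proof (rule measurable_to_sum_meas)
  fix A B assume "A \<in> sets M" "B \<in> sets N"
  moreover have "Inl -` (Inl ` A \<union> Inr ` B) \<inter> space M = A \<inter> space M" by auto
  ultimately show "Inl -` (Inl ` A \<union> Inr ` B) \<inter> space M \<in> sets M" by auto
qed auto

lemma space_Fp: "space (Fp X) = UNIV \<times> space X"
  unfolding Fp_def by (simp add: space_pair_measure)

lemma space_Fs: "space (Fs X) = Inl ` (UNIV \<times> space X) \<union> Inr ` UNIV"
  unfolding Fs_def space_sum_meas by (simp add: space_pair_measure)

lemma space_Fs_UNIV: "space Y = UNIV \<Longrightarrow> space (Fs Y :: ('a::finite \<times> 'y + unit) measure) = UNIV"
proof (rule set_eqI)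
  assume Y: "space Y = UNIV"
  fix q :: "('a \<times> 'y) + unit"
  show "q \<in> space (Fs Y) \<longleftrightarrow> q \<in> UNIV" by (cases q) (auto simp: space_Fs Y)
qed

lemma Inl_in_sets_Fs: "S \<in> sets Y \<Longrightarrow> Inl ` ({a} \<times> S) \<in> sets (Fs Y)"
  unfolding Fs_def by (intro Inl_in_sets_sum_meas) simp

lemma Inl_singleton_in_sets_Fs: "{w} \<in> sets Y \<Longrightarrow> {Inl (a, w)} \<in> sets (Fs Y)"
  using Inl_in_sets_Fs[of "{w}" Y a] by simp

lemma Inr_in_sets_Fs: "{Inr ()} \<in> sets (Fs Y)"
  using Inr_in_sets_sum_meas[of "{()}" One "Alph \<Otimes>\<^sub>M Y"] by (simp add: Fs_def)

lemma measurable_Inl_Fs: "Inl \<in> measurable (Alph \<Otimes>\<^sub>M Y) (Fs Y)"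
  unfolding Fs_def by (rule measurable_Inl_sum_meas)

lemma SP_Fs: "SP (Fs X) = subprob_algebra (Fs X)"
  by (rule SP_eq_subprob_algebra) (auto simp: space_Fs)

section \<open>Kleisli composition, transition measures and the liftings\<close>

lemma kmu_distr:
  assumes g: "g \<in> measurable M T"
    and em: "\<And>S. S \<in> sets Z \<Longrightarrow> (\<lambda>N. emeasure N S) \<in> borel_measurable T"
  shows "kmu Z (distr M T g) = measure_of (space Z) (sets Z) (\<lambda>S. \<integral>\<^sup>+ y. emeasure (g y) S \<partial>M)"
  unfolding kmu_def
  by (rule measure_of_eq[OF sets.space_closed])
     (simp add: sets.sigma_sets_eq nn_integral_distr[OF g] em)

lemma kcomp_eq_bind:
  assumes g: "g \<in> measurable (f x) T" and g': "g \<in> measurable (f x) (subprob_algebra Z)"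
    and em: "\<And>S. S \<in> sets Z \<Longrightarrow> (\<lambda>N. emeasure N S) \<in> borel_measurable T"
    and ne: "space (f x) \<noteq> {}"
  shows "kcomp T Z g f x = bind (f x) g"
proof -
  have "bind (f x) g = join (distr (f x) (subprob_algebra Z) g)"
    by (rule bind_nonempty''[OF g' ne])
  also have "\<dots> = kmu Z (distr (f x) (subprob_algebra Z) g)"
    unfolding join_def kmu_def by simp
  also have "\<dots> = kcomp T Z g f x"
    unfolding kcomp_def using kmu_distr[OF g em] kmu_distr[OF g' measurable_emeasure_subprob_algebra] by simp
  finally show ?thesis ..
qed

lemma kcomp_return_eq_distr:
  assumes h: "h x \<in> space (subprob_algebra Y)" and phi: "phi \<in> measurable Y FY"
    and ret: "(\<lambda>w. return FY (phi w)) \<in> measurable Y T"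
    and em: "\<And>S. S \<in> sets FY \<Longrightarrow> (\<lambda>N. emeasure N S) \<in> borel_measurable T"
  shows "kcomp T FY (\<lambda>w. return FY (phi w)) h x = distr (h x) FY phi"
proof -
  have sets: "sets (h x) = sets Y" and ne: "space (h x) \<noteq> {}"
    using h by (auto simp: space_subprob_algebra dest: subprob_space.subprob_not_empty)
  have mh: "measurable (h x) = measurable Y"
    using sets by (auto intro!: measurable_cong_sets)
  have "kcomp T FY (\<lambda>w. return FY (phi w)) h x = bind (h x) (\<lambda>w. return FY (phi w))"
    by (rule kcomp_eq_bind[where f=h and x=x, OF _ _ em ne])
       (simp_all add: mh ret measurable_compose[OF phi return_measurable])
  also have "\<dots> = distr (h x) FY phi"
    using ne by (rule bind_return_distr') (simp add: mh phi)
  finally show ?thesis .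
qed

lemma distr_distr_inverse:
  assumes phi: "phi \<in> measurable A B" and psi: "psi \<in> measurable B A"
    and psi_phi: "\<And>w. w \<in> space A \<Longrightarrow> psi (phi w) = w" and M: "sets M = sets A"
  shows "distr (distr M B phi) A psi = M"
proof -
  have phi': "phi \<in> measurable M B" using phi M by (simp cong: measurable_cong_sets)
  have "distr (distr M B phi) A psi = distr M A (psi \<circ> phi)" by (rule distr_distr[OF psi phi'])
  also have "\<dots> = distr M A (\<lambda>w. w)"
    by (rule distr_cong) (auto simp: psi_phi sets_eq_imp_space_eq[OF M])
  also have "\<dots> = M" by (rule distr_id2) (simp add: M)
  finally show ?thesis .
qed

lemma distr_eq_iff_eq_distr_inverse:
  assumes phi: "phi \<in> measurable A B" and psi: "psi \<in> measurable B A"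
    and psi_phi: "\<And>w. w \<in> space A \<Longrightarrow> psi (phi w) = w"
    and phi_psi: "\<And>q. q \<in> space B \<Longrightarrow> phi (psi q) = q"
    and M: "sets M = sets A" and R: "sets R = sets B"
  shows "distr M B phi = R \<longleftrightarrow> M = distr R A psi"
  using distr_distr_inverse[OF phi psi psi_phi M] distr_distr_inverse[OF psi phi phi_psi R] by auto

lemma sets_Pa_p[simp]: "sets (Pa_p X \<alpha> a x) = sets X"
  unfolding Pa_p_def by (simp add: sets_measure_of[OF sets.space_closed] sets.sigma_sets_eq)

lemma sets_Pa_s[simp]: "sets (Pa_s X \<alpha> a x) = sets X"
  unfolding Pa_s_def by (simp add: sets_measure_of[OF sets.space_closed] sets.sigma_sets_eq)

lemma space_Pa_p[simp]: "space (Pa_p X \<alpha> a x) = space X"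
  unfolding Pa_p_def by (simp add: space_measure_of[OF sets.space_closed])

lemma space_Pa_s[simp]: "space (Pa_s X \<alpha> a x) = space X"
  unfolding Pa_s_def by (simp add: space_measure_of[OF sets.space_closed])

lemma measurable_Pa_p[simp]: "measurable (Pa_p X \<alpha> a x) = measurable X"
  by (auto intro!: measurable_cong_sets)

lemma measurable_Pa_s[simp]: "measurable (Pa_s X \<alpha> a x) = measurable X"
  by (auto intro!: measurable_cong_sets)

lemma Pa_p_eq_distr_density:
  assumes ax: "sets (\<alpha> x) = sets (Fp X)"
  shows "Pa_p X \<alpha> a x = distr (density (\<alpha> x) (\<lambda>p. indicator {a} (fst p))) X snd"
  unfolding Pa_p_def distr_def
proof (rule measure_of_eq[OF sets.space_closed])
  let ?D = "density (\<alpha> x) (\<lambda>p. indicator {a} (fst p))"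
  have ms: "measurable (\<alpha> x) = measurable (Fp X)" using ax by (auto intro!: measurable_cong_sets)
  have ind: "(\<lambda>p. indicator {a} (fst p) :: ennreal) \<in> borel_measurable (\<alpha> x)"
    unfolding ms Fp_def by measurable
  fix S assume "S \<in> sigma_sets (space X) (sets X)"
  then have S: "S \<in> sets X" by (simp add: sets.sigma_sets_eq)
  have "emeasure ?D (snd -` S \<inter> space ?D) = emeasure ?D (UNIV \<times> S)"
    using sets.sets_into_space[OF S] sets_eq_imp_space_eq[OF ax]
    by (auto simp: space_Fp intro!: arg_cong2[where f=emeasure])
  also have "\<dots> = (\<integral>\<^sup>+ p. indicator {a} (fst p) * indicator (UNIV \<times> S) p \<partial>\<alpha> x)"
    by (rule emeasure_density[OF ind]) (use S ax in \<open>simp add: Fp_def\<close>)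
  also have "\<dots> = (\<integral>\<^sup>+ p. indicator ({a} \<times> S) p \<partial>\<alpha> x)"
    by (intro nn_integral_cong) (auto split: split_indicator)
  also have "\<dots> = emeasure (\<alpha> x) ({a} \<times> S)" using S ax by (simp add: Fp_def)
  finally show "emeasure (\<alpha> x) ({a} \<times> S) = emeasure ?D (snd -` S \<inter> space ?D)" ..
qed

lemma nn_integral_Pa_p:
  assumes ax: "sets (\<alpha> x) = sets (Fp X)" and f: "f \<in> borel_measurable X"
  shows "(\<integral>\<^sup>+ y. f y \<partial>Pa_p X \<alpha> a x) = (\<integral>\<^sup>+ p. indicator {a} (fst p) * f (snd p) \<partial>\<alpha> x)"
proof -
  have ms: "measurable (\<alpha> x) = measurable (Fp X)" using ax by (auto intro!: measurable_cong_sets)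
  have snd: "snd \<in> measurable (\<alpha> x) X" unfolding ms Fp_def by measurable
  have ind: "(\<lambda>p. indicator {a} (fst p) :: ennreal) \<in> borel_measurable (\<alpha> x)"
    unfolding ms Fp_def by measurable
  show ?thesis unfolding Pa_p_eq_distr_density[where \<alpha>=\<alpha> and x=x, OF ax] using snd
    by (simp add: nn_integral_distr f nn_integral_density[OF ind] measurable_compose[OF snd f])
qed

definition letter_weight :: "'a \<Rightarrow> ('x \<Rightarrow> ennreal) \<Rightarrow> ('a \<times> 'x) + unit \<Rightarrow> ennreal" where
  "letter_weight a f q = (case q of Inl p \<Rightarrow> indicator {a} (fst p) * f (snd p) | Inr u \<Rightarrow> 0)"

lemma borel_measurable_letter_weight:
  "f \<in> borel_measurable X \<Longrightarrow> letter_weight a f \<in> borel_measurable (Fs X)"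
  unfolding letter_weight_def Fs_def by (rule measurable_from_sum_meas) auto

lemma measurable_case_sum_snd:
  assumes M: "sets M = sets (Fs X)" and y0: "y0 \<in> space X"
  shows "case_sum snd (\<lambda>_. y0) \<in> measurable M X"
  unfolding measurable_cong_sets[OF M refl] Fs_def
  by (intro measurable_from_sum_meas) (auto simp: y0)

lemma Pa_s_eq_distr_density:
  assumes ax: "sets (\<alpha> x) = sets (Fs X)" and y0: "y0 \<in> space X"
  shows "Pa_s X \<alpha> a x = distr (density (\<alpha> x) (letter_weight a (\<lambda>_. 1))) X (case_sum snd (\<lambda>_. y0))"
  unfolding Pa_s_def distr_def
proof (rule measure_of_eq[OF sets.space_closed])
  let ?\<pi> = "case_sum snd (\<lambda>_. y0)" and ?D = "density (\<alpha> x) (letter_weight a (\<lambda>_. 1))"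
  have ind: "letter_weight a (\<lambda>_. 1) \<in> borel_measurable (\<alpha> x)"
    using borel_measurable_letter_weight[of "\<lambda>_. 1" X a] by (simp add: measurable_cong_sets[OF ax refl])
  fix S assume "S \<in> sigma_sets (space X) (sets X)"
  then have S: "S \<in> sets X" by (simp add: sets.sigma_sets_eq)
  have "emeasure ?D (?\<pi> -` S \<inter> space ?D)
      = (\<integral>\<^sup>+ q. letter_weight a (\<lambda>_. 1) q * indicator (?\<pi> -` S \<inter> space (\<alpha> x)) q \<partial>\<alpha> x)"
    using measurable_sets[OF measurable_case_sum_snd[OF ax y0] S] by (simp add: emeasure_density[OF ind])
  also have "\<dots> = (\<integral>\<^sup>+ q. indicator (Inl ` ({a} \<times> S)) q \<partial>\<alpha> x)"
    using sets.sets_into_space[OF S] sets_eq_imp_space_eq[OF ax]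
    by (intro nn_integral_cong) (auto simp: space_Fs letter_weight_def split: split_indicator sum.split)
  also have "\<dots> = emeasure (\<alpha> x) (Inl ` ({a} \<times> S))"
    by (rule nn_integral_indicator) (simp add: ax Inl_in_sets_Fs[OF S])
  finally show "emeasure (\<alpha> x) (Inl ` ({a} \<times> S)) = emeasure ?D (?\<pi> -` S \<inter> space ?D)" ..
qed

lemma nn_integral_Pa_s:
  assumes ax: "sets (\<alpha> x) = sets (Fs X)" and f: "f \<in> borel_measurable X"
  shows "(\<integral>\<^sup>+ y. f y \<partial>Pa_s X \<alpha> a x) = (\<integral>\<^sup>+ q. letter_weight a f q \<partial>\<alpha> x)"
proof (cases "space X = {}")
  case True
  have "space (Pa_s X \<alpha> a x) = {}" unfolding Pa_s_def using True by (simp add: space_measure_of_conv)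
  moreover have "space (\<alpha> x) = Inr ` UNIV"
    using sets_eq_imp_space_eq[OF ax] True by (simp add: space_Fs)
  then have "(\<integral>\<^sup>+ q. letter_weight a f q \<partial>\<alpha> x) = (\<integral>\<^sup>+ q. 0 \<partial>\<alpha> x)"
    by (intro nn_integral_cong) (auto simp: letter_weight_def)
  ultimately show ?thesis by (simp add: nn_integral_empty)
next
  case False
  then obtain y0 where y0: "y0 \<in> space X" by auto
  note \<pi> = measurable_case_sum_snd[OF ax y0]
  have ind: "letter_weight a (\<lambda>_. 1) \<in> borel_measurable (\<alpha> x)"
    using borel_measurable_letter_weight[of "\<lambda>_. 1" X a] by (simp add: measurable_cong_sets[OF ax refl])
  have "(\<integral>\<^sup>+ y. f y \<partial>Pa_s X \<alpha> a x)
      = (\<integral>\<^sup>+ q. letter_weight a (\<lambda>_. 1) q * f (case_sum snd (\<lambda>_. y0) q) \<partial>\<alpha> x)"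
    unfolding Pa_s_eq_distr_density[where \<alpha>=\<alpha> and x=x, OF ax y0] using \<pi>
    by (simp add: nn_integral_distr f nn_integral_density[OF ind] measurable_compose[OF \<pi> f])
  also have "\<dots> = (\<integral>\<^sup>+ q. letter_weight a f q \<partial>\<alpha> x)"
    by (intro nn_integral_cong) (auto simp: letter_weight_def split: sum.split)
  finally show ?thesis .
qed

lemma lift_p_eq: "lift_p h = (\<lambda>p. return Alph (fst p) \<Otimes>\<^sub>M h (snd p))"
  by (simp add: lift_p_def lam_p_def Fmap_p_def fun_eq_iff)

lemma lift_s_eq:
  "lift_s Y h q = (case q of Inl p \<Rightarrow> distr (return Alph (fst p) \<Otimes>\<^sub>M h (snd p)) (Fs Y) Inl
     | Inr u \<Rightarrow> return (Fs Y) (Inr ()))"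
  by (cases q) (simp_all add: lift_s_def lam_s_def Fmap_s_def)

lemma measurable_lift_p:
  "h \<in> measurable X (subprob_algebra Y) \<Longrightarrow>
    lift_p h \<in> measurable (Fp X) (subprob_algebra (Fp Y :: ('a::finite \<times> 'y) measure))"
  unfolding lift_p_eq Fp_def
  by (intro measurable_pair_measure measurable_compose[OF measurable_fst return_measurable]
      measurable_compose[OF measurable_snd])

lemma measurable_lift_p_prob:
  "h \<in> measurable X (prob_algebra Y) \<Longrightarrow>
    lift_p h \<in> measurable (Fp X) (prob_algebra (Fp Y :: ('a::finite \<times> 'y) measure))"
  unfolding lift_p_eq Fp_def
  by (intro measurable_pair_prob measurable_compose[OF measurable_fst measurable_return_prob_space]
      measurable_compose[OF measurable_snd])

lemma measurable_lift_s:
  assumes h: "h \<in> measurable X (subprob_algebra Y)"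
  shows "lift_s Y h \<in> measurable (Fs X) (subprob_algebra (Fs Y :: (('a::finite \<times> 'y) + unit) measure))"
proof -
  have "(\<lambda>p. return Alph (fst p) \<Otimes>\<^sub>M h (snd p)) \<in> measurable (Alph \<Otimes>\<^sub>M X) (subprob_algebra (Alph \<Otimes>\<^sub>M Y))"
    by (intro measurable_pair_measure measurable_compose[OF measurable_fst return_measurable]
      measurable_compose[OF measurable_snd h])
  then have "(\<lambda>p. distr (return Alph (fst p) \<Otimes>\<^sub>M h (snd p)) (Fs Y) Inl) \<in> measurable (Alph \<Otimes>\<^sub>M X) (subprob_algebra (Fs Y))"
    by (rule measurable_compose[OF _ measurable_distr[OF measurable_Inl_Fs]])
  moreover have "return (Fs Y) (Inr ()) \<in> space (subprob_algebra (Fs Y))"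
    by (simp add: space_subprob_algebra subprob_space_return space_Fs)
  ultimately show ?thesis
    unfolding lift_s_eq[abs_def] Fs_def[of X] by (intro measurable_from_sum_meas) (simp_all add: Pi_iff)
qed

lemma measurable_lift_s_prob:
  assumes h: "h \<in> measurable X (prob_algebra Y)"
  shows "lift_s Y h \<in> measurable (Fs X) (prob_algebra (Fs Y :: (('a::finite \<times> 'y) + unit) measure))"
proof -
  have "(\<lambda>p. return Alph (fst p) \<Otimes>\<^sub>M h (snd p)) \<in> measurable (Alph \<Otimes>\<^sub>M X) (prob_algebra (Alph \<Otimes>\<^sub>M Y))"
    by (intro measurable_pair_prob measurable_compose[OF measurable_fst measurable_return_prob_space]
      measurable_compose[OF measurable_snd h])
  then have "(\<lambda>p. distr (return Alph (fst p) \<Otimes>\<^sub>M h (snd p)) (Fs Y) Inl) \<in> measurable (Alph \<Otimes>\<^sub>M X) (prob_algebra (Fs Y))"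
    by (rule measurable_compose[OF _ measurable_distr_prob_space[OF measurable_Inl_Fs]])
  moreover have "return (Fs Y) (Inr ()) \<in> space (prob_algebra (Fs Y))"
    by (simp add: space_prob_algebra prob_space_return space_Fs)
  ultimately show ?thesis
    unfolding lift_s_eq[abs_def] Fs_def[of X] by (intro measurable_from_sum_meas) (simp_all add: Pi_iff)
qed

lemma emeasure_return_pair_Times:
  assumes "subprob_space N" "S \<in> sets N"
  shows "emeasure (return Alph a \<Otimes>\<^sub>M N) ({b} \<times> S) = indicator {b} a * emeasure N S"
proof -
  interpret sigma_finite_measure N using assms(1) by (rule subprob_space_imp_sigma_finite)
  show ?thesis using assms(2) by (simp add: emeasure_pair_measure_Times)
qed

lemma emeasure_lift_p:
  assumes h: "h \<in> measurable X (subprob_algebra Y)" and p: "p \<in> space (Fp X)" and S: "S \<in> sets Y"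
  shows "emeasure (lift_p h p) ({a} \<times> S) = indicator {a} (fst p) * emeasure (h (snd p)) S"
proof -
  have p': "snd p \<in> space X" using p by (cases p) (simp add: space_Fp)
  show ?thesis
    unfolding lift_p_eq
    by (rule emeasure_return_pair_Times[OF subprob_space_kernel[OF h p']]) (simp add: sets_kernel[OF h p'] S)
qed

lemma emeasure_bind_lift_p:
  assumes ax: "sets (\<alpha> x) = sets (Fp X)" "space (\<alpha> x) \<noteq> {}"
    and h: "h \<in> measurable X (subprob_algebra Y)" and S: "S \<in> sets Y"
  shows "emeasure (bind (\<alpha> x) (lift_p h)) ({a} \<times> S) = (\<integral>\<^sup>+ y. emeasure (h y) S \<partial>Pa_p X \<alpha> a x)"
proof -
  have ma: "measurable (\<alpha> x) = measurable (Fp X)" using ax by (auto intro!: measurable_cong_sets)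
  have lm: "lift_p h \<in> measurable (\<alpha> x) (subprob_algebra (Fp Y))"
    unfolding ma by (rule measurable_lift_p[OF h])
  have aS: "{a} \<times> S \<in> sets (Fp Y)" unfolding Fp_def by (intro pair_measureI) (simp_all add: S)
  have "emeasure (bind (\<alpha> x) (lift_p h)) ({a} \<times> S) = (\<integral>\<^sup>+ p. emeasure (lift_p h p) ({a} \<times> S) \<partial>\<alpha> x)"
    by (rule emeasure_bind[OF ax(2) lm aS])
  also have "\<dots> = (\<integral>\<^sup>+ p. indicator {a} (fst p) * emeasure (h (snd p)) S \<partial>\<alpha> x)"
    using sets_eq_imp_space_eq[OF ax(1)] by (intro nn_integral_cong emeasure_lift_p[OF h _ S]) simp
  also have "\<dots> = (\<integral>\<^sup>+ y. emeasure (h y) S \<partial>Pa_p X \<alpha> a x)"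
    by (rule nn_integral_Pa_p[where \<alpha>=\<alpha> and x=x, OF ax(1), symmetric]) (rule measurable_emeasure_kernel[OF h S])
  finally show ?thesis .
qed

lemma emeasure_lift_s_Inl:
  fixes h :: "'x \<Rightarrow> 'y measure" and a :: "'a::finite"
  assumes h: "h \<in> measurable X (subprob_algebra Y)" and q: "q \<in> space (Fs X)" and S: "S \<in> sets Y"
  shows "emeasure (lift_s Y h q) (Inl ` ({a} \<times> S)) = letter_weight a (\<lambda>y. emeasure (h y) S) q"
proof (cases q)
  case (Inl p)
  then have p: "snd p \<in> space X" using q by (auto simp: space_Fs)
  have sets: "sets (return Alph (fst p) \<Otimes>\<^sub>M h (snd p)) = sets (Alph \<Otimes>\<^sub>M Y)"
    by (rule sets_pair_measure_cong) (simp_all add: sets_kernel[OF h p])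
  have Inl: "Inl \<in> measurable (return Alph (fst p) \<Otimes>\<^sub>M h (snd p)) (Fs Y)"
    using measurable_Inl_Fs sets by (simp cong: measurable_cong_sets)
  have "(Inl :: 'a \<times> 'y \<Rightarrow> ('a \<times> 'y) + unit) -` Inl ` ({a} \<times> S) \<inter> space (return Alph (fst p) \<Otimes>\<^sub>M h (snd p)) = {a} \<times> S"
    using sets.sets_into_space[OF S] sets_eq_imp_space_eq[OF sets] by (auto simp: space_pair_measure)
  then have "emeasure (lift_s Y h q) (Inl ` ({a} \<times> S)) = emeasure (return Alph (fst p) \<Otimes>\<^sub>M h (snd p)) ({a} \<times> S)"
    unfolding \<open>q = Inl p\<close> lift_s_eq by (simp add: emeasure_distr[OF Inl Inl_in_sets_Fs[OF S]])
  also have "\<dots> = letter_weight a (\<lambda>y. emeasure (h y) S) q"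
    unfolding \<open>q = Inl p\<close> letter_weight_def using S
    by (simp add: emeasure_return_pair_Times subprob_space_kernel[OF h p] sets_kernel[OF h p])
  finally show ?thesis .
qed (simp add: lift_s_eq letter_weight_def emeasure_return Inl_in_sets_Fs[OF S] image_iff)

lemma emeasure_lift_s_Inr:
  assumes h: "h \<in> measurable X (subprob_algebra Y)" and q: "q \<in> space (Fs X)"
  shows "emeasure (lift_s Y h q) {Inr ()} = indicator {Inr ()} q"
proof (cases q)
  case (Inl p)
  then have p: "snd p \<in> space X" using q by (auto simp: space_Fs)
  have sets: "sets (return Alph (fst p) \<Otimes>\<^sub>M h (snd p)) = sets (Alph \<Otimes>\<^sub>M Y)"
    by (rule sets_pair_measure_cong) (simp_all add: sets_kernel[OF h p])
  have Inl: "Inl \<in> measurable (return Alph (fst p) \<Otimes>\<^sub>M h (snd p)) (Fs Y)"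
    using measurable_Inl_Fs sets by (simp cong: measurable_cong_sets)
  show ?thesis
    unfolding \<open>q = Inl p\<close> lift_s_eq by (simp add: emeasure_distr[OF Inl Inr_in_sets_Fs] vimage_def)
qed (simp add: lift_s_eq emeasure_return Inr_in_sets_Fs)

lemma emeasure_bind_lift_s_Inl:
  assumes ax: "sets (\<alpha> x) = sets (Fs X)" "space (\<alpha> x) \<noteq> {}"
    and h: "h \<in> measurable X (subprob_algebra Y)" and S: "S \<in> sets Y"
  shows "emeasure (bind (\<alpha> x) (lift_s Y h)) (Inl ` ({a} \<times> S)) = (\<integral>\<^sup>+ y. emeasure (h y) S \<partial>Pa_s X \<alpha> a x)"
proof -
  have ma: "measurable (\<alpha> x) = measurable (Fs X)" using ax by (auto intro!: measurable_cong_sets)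
  have lm: "lift_s Y h \<in> measurable (\<alpha> x) (subprob_algebra (Fs Y))"
    unfolding ma by (rule measurable_lift_s[OF h])
  have "emeasure (bind (\<alpha> x) (lift_s Y h)) (Inl ` ({a} \<times> S)) =
      (\<integral>\<^sup>+ q. emeasure (lift_s Y h q) (Inl ` ({a} \<times> S)) \<partial>\<alpha> x)"
    by (rule emeasure_bind[OF ax(2) lm Inl_in_sets_Fs[OF S]])
  also have "\<dots> = (\<integral>\<^sup>+ q. letter_weight a (\<lambda>y. emeasure (h y) S) q \<partial>\<alpha> x)"
    using sets_eq_imp_space_eq[OF ax(1)] by (intro nn_integral_cong emeasure_lift_s_Inl[OF h _ S]) simp
  also have "\<dots> = (\<integral>\<^sup>+ y. emeasure (h y) S \<partial>Pa_s X \<alpha> a x)"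
    by (rule nn_integral_Pa_s[where \<alpha>=\<alpha> and x=x, OF ax(1), symmetric]) (rule measurable_emeasure_kernel[OF h S])
  finally show ?thesis .
qed

lemma emeasure_bind_lift_s_Inr:
  assumes ax: "sets (\<alpha> x) = sets (Fs X)" "space (\<alpha> x) \<noteq> {}"
    and h: "h \<in> measurable X (subprob_algebra Y)"
  shows "emeasure (bind (\<alpha> x) (lift_s Y h)) {Inr ()} = emeasure (\<alpha> x) {Inr ()}"
proof -
  have ma: "measurable (\<alpha> x) = measurable (Fs X)" using ax by (auto intro!: measurable_cong_sets)
  have lm: "lift_s Y h \<in> measurable (\<alpha> x) (subprob_algebra (Fs Y))"
    unfolding ma by (rule measurable_lift_s[OF h])
  have "emeasure (bind (\<alpha> x) (lift_s Y h)) {Inr ()} = (\<integral>\<^sup>+ q. emeasure (lift_s Y h q) {Inr ()} \<partial>\<alpha> x)"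
    by (rule emeasure_bind[OF ax(2) lm Inr_in_sets_Fs])
  also have "\<dots> = (\<integral>\<^sup>+ q. indicator {Inr ()} q \<partial>\<alpha> x)"
    using sets_eq_imp_space_eq[OF ax(1)] by (intro nn_integral_cong emeasure_lift_s_Inr[OF h]) simp
  also have "\<dots> = emeasure (\<alpha> x) {Inr ()}"
    by (simp add: ax(1) Inr_in_sets_Fs)
  finally show ?thesis .
qed

lemma is_hom_iff_fixpoint:
  assumes TY: "measurable X TY = measurable X KY"
    and KY: "\<And>h. h \<in> measurable X KY \<Longrightarrow> h \<in> measurable X (subprob_algebra Y)"
    and kappa: "\<And>w. kappa w = return FY (phi w)" "kappa \<in> measurable Y TFY"
    and phi: "phi \<in> measurable Y FY" and psi: "psi \<in> measurable FY Y"
    and psi_phi: "\<And>w. w \<in> space Y \<Longrightarrow> psi (phi w) = w"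
    and phi_psi: "\<And>q. q \<in> space FY \<Longrightarrow> phi (psi q) = q"
    and em: "\<And>S. S \<in> sets FY \<Longrightarrow> (\<lambda>N. emeasure N S) \<in> borel_measurable TFY"
    and lift: "\<And>h. h \<in> measurable X KY \<Longrightarrow>
      lift h \<in> measurable FX TFY \<and> lift h \<in> measurable FX (subprob_algebra FY)"
    and \<alpha>: "\<And>x. x \<in> space X \<Longrightarrow> sets (\<alpha> x) = sets FX \<and> space (\<alpha> x) \<noteq> {}"
  shows "is_hom TY FY TFY lift X \<alpha> kappa h \<longleftrightarrow>
    h \<in> measurable X KY \<and> (\<forall>x\<in>space X. h x = distr (bind (\<alpha> x) (lift h)) Y psi)"
proof -
  have "kcomp TFY FY kappa h x = kcomp TFY FY (lift h) \<alpha> x \<longleftrightarrow>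
      h x = distr (bind (\<alpha> x) (lift h)) Y psi"
    if h: "h \<in> measurable X KY" and x: "x \<in> space X" for x
  proof -
    have hx: "h x \<in> space (subprob_algebra Y)" using measurable_space[OF KY[OF h] x] .
    have ma: "measurable (\<alpha> x) = measurable FX"
      using \<alpha>[OF x] by (auto intro!: measurable_cong_sets)
    have kappa_eq: "kappa = (\<lambda>w. return FY (phi w))" using kappa(1) by (simp add: fun_eq_iff)
    have "kcomp TFY FY kappa h x = distr (h x) FY phi"
      unfolding kappa_eq
      by (rule kcomp_return_eq_distr[where h=h and x=x, OF hx phi _ em]) (use kappa(2) kappa_eq in simp_all)
    moreover have "kcomp TFY FY (lift h) \<alpha> x = bind (\<alpha> x) (lift h)"
      using lift[OF h] \<alpha>[OF x] by (intro kcomp_eq_bind em) (simp_all add: ma)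
    moreover have "sets (bind (\<alpha> x) (lift h)) = sets FY"
    proof (rule sets_bind)
      fix y assume "y \<in> space (\<alpha> x)"
      then have "y \<in> space FX" using sets_eq_imp_space_eq[of "\<alpha> x" FX] \<alpha>[OF x] by auto
      then show "sets (lift h y) = sets FY" by (rule sets_kernel[OF conjunct2[OF lift[OF h]]])
    qed (use \<alpha>[OF x] in auto)
    ultimately show ?thesis
      using hx by (simp add: distr_eq_iff_eq_distr_inverse[OF phi psi psi_phi phi_psi] space_subprob_algebra)
  qed
  then show ?thesis unfolding is_hom_def TY by blast
qed

section \<open>The trace pre-measures\<close>

context
  fixes X :: "'x measure" and \<alpha> :: "'x \<Rightarrow> ('a::finite \<times> 'x) measure"
  assumes \<alpha>: "\<alpha> \<in> measurable X (subprob_algebra (Fp X))"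
begin

lemma nn_integral_Pa_p_kernel:
  "x \<in> space X \<Longrightarrow> f \<in> borel_measurable X \<Longrightarrow>
   (\<integral>\<^sup>+ y. f y \<partial>Pa_p X \<alpha> a x) = (\<integral>\<^sup>+ p. indicator {a} (fst p) * f (snd p) \<partial>\<alpha> x)"
  by (rule nn_integral_Pa_p) (rule sets_kernel[OF \<alpha>])

lemma borel_measurable_tr_cyl_p: "(\<lambda>x. tr_cyl_p X \<alpha> u x) \<in> borel_measurable X"
proof (induction u)
  case (Cons a u)
  have "(\<lambda>p. indicator {a} (fst p) * tr_cyl_p X \<alpha> u (snd p)) \<in> borel_measurable (Fp X)"
    unfolding Fp_def using Cons by measurable
  then have "(\<lambda>x. \<integral>\<^sup>+ p. indicator {a} (fst p) * tr_cyl_p X \<alpha> u (snd p) \<partial>\<alpha> x) \<in> borel_measurable X"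
    by (rule measurable_compose[OF \<alpha> nn_integral_measurable_subprob_algebra])
  then show ?case
    by (rule measurable_cong[THEN iffD1, rotated]) (simp add: nn_integral_Pa_p_kernel Cons)
qed simp

lemma sum_tr_cyl_p_snoc:
  assumes prob: "\<And>x. x \<in> space X \<Longrightarrow> prob_space (\<alpha> x)"
  shows "x \<in> space X \<Longrightarrow> (\<Sum>b\<in>UNIV. tr_cyl_p X \<alpha> (u @ [b]) x) = tr_cyl_p X \<alpha> u x"
proof (induction u arbitrary: x)
  case Nil
  have "(\<Sum>b\<in>UNIV. tr_cyl_p X \<alpha> [b] x) = (\<Sum>b\<in>UNIV. \<integral>\<^sup>+ p. indicator {b} (fst p) \<partial>\<alpha> x)"
    using nn_integral_Pa_p_kernel[OF Nil, of "\<lambda>_. 1"] by simp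
  also have "\<dots> = (\<integral>\<^sup>+ p. (\<Sum>b\<in>UNIV. indicator {b} (fst p)) \<partial>\<alpha> x)"
    by (rule nn_integral_sum[symmetric]) (simp add: sets_kernel[OF \<alpha> Nil] Fp_def cong: measurable_cong_sets)
  also have "\<dots> = (\<integral>\<^sup>+ p. 1 \<partial>\<alpha> x)"
    by (intro nn_integral_cong) (simp add: indicator_def)
  also have "\<dots> = 1" using prob[OF Nil] by (simp add: prob_space.emeasure_space_1)
  finally show ?case by simp
next
  case (Cons a u)
  have "(\<Sum>b\<in>UNIV. tr_cyl_p X \<alpha> ((a # u) @ [b]) x) = (\<integral>\<^sup>+ y. (\<Sum>b\<in>UNIV. tr_cyl_p X \<alpha> (u @ [b]) y) \<partial>Pa_p X \<alpha> a x)"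
    by (simp add: nn_integral_sum borel_measurable_tr_cyl_p)
  also have "\<dots> = tr_cyl_p X \<alpha> (a # u) x"
    by (simp only: tr_cyl_p.simps) (intro nn_integral_cong, simp add: Cons.IH)
  finally show ?case .
qed

end

context
  fixes X :: "'x measure" and \<alpha> :: "'x \<Rightarrow> (('a::finite \<times> 'x) + unit) measure"
  assumes \<alpha>: "\<alpha> \<in> measurable X (subprob_algebra (Fs X))"
begin

lemma nn_integral_Pa_s_kernel:
  "x \<in> space X \<Longrightarrow> f \<in> borel_measurable X \<Longrightarrow>
   (\<integral>\<^sup>+ y. f y \<partial>Pa_s X \<alpha> a x) = (\<integral>\<^sup>+ q. letter_weight a f q \<partial>\<alpha> x)"
  by (rule nn_integral_Pa_s) (rule sets_kernel[OF \<alpha>])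

lemma borel_measurable_nn_integral_Pa_s:
  "f \<in> borel_measurable X \<Longrightarrow> (\<lambda>x. \<integral>\<^sup>+ y. f y \<partial>Pa_s X \<alpha> a x) \<in> borel_measurable X"
  by (rule measurable_cong[THEN iffD1, rotated])
     (auto simp: nn_integral_Pa_s_kernel intro: measurable_compose[OF \<alpha> nn_integral_measurable_subprob_algebra]
       borel_measurable_letter_weight)

lemma borel_measurable_tr_single: "(\<lambda>x. tr_single X \<alpha> u x) \<in> borel_measurable X"
  by (induction u) (simp_all add: measurable_emeasure_kernel[OF \<alpha> Inr_in_sets_Fs] borel_measurable_nn_integral_Pa_s)

lemma borel_measurable_tr_cyl_s: "(\<lambda>x. tr_cyl_s X \<alpha> u x) \<in> borel_measurable X"
  by (induction u) (simp_all add: borel_measurable_nn_integral_Pa_s)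

text \<open>\<open>C(u)\<close> is the disjoint union of \<open>{u}\<close> and the \<open>C(u @ [b])\<close>; the trace pre-measure is
  additive on this splitting only up to the mass that a sub-probability kernel loses.\<close>

lemma tr_single_plus_sum_tr_cyl_s_Nil:
  assumes x: "x \<in> space X"
  shows "tr_single X \<alpha> [] x + (\<Sum>b\<in>UNIV. tr_cyl_s X \<alpha> [b] x) = emeasure (\<alpha> x) (space (\<alpha> x))"
proof -
  have sx: "sets (\<alpha> x) = sets (Fs X)" by (rule sets_kernel[OF \<alpha> x])
  have mF: "letter_weight b (\<lambda>_. 1) \<in> borel_measurable (\<alpha> x)" for b
    using borel_measurable_letter_weight[of "\<lambda>_. 1" X b] sx by (simp cong: measurable_cong_sets)
  have inr: "{Inr ()} \<in> sets (\<alpha> x)" by (simp add: sx Inr_in_sets_Fs)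
  have "tr_single X \<alpha> [] x + (\<Sum>b\<in>UNIV. tr_cyl_s X \<alpha> [b] x)
     = (\<integral>\<^sup>+ q. indicator {Inr ()} q \<partial>\<alpha> x) + (\<Sum>b\<in>UNIV. \<integral>\<^sup>+ q. letter_weight b (\<lambda>_. 1) q \<partial>\<alpha> x)"
    using inr nn_integral_Pa_s_kernel[OF x, of "\<lambda>_. 1"] by simp
  also have "\<dots> = (\<integral>\<^sup>+ q. indicator {Inr ()} q + (\<Sum>b\<in>UNIV. letter_weight b (\<lambda>_. 1) q) \<partial>\<alpha> x)"
    using inr mF by (simp add: nn_integral_sum nn_integral_add borel_measurable_sum)
  also have "\<dots> = (\<integral>\<^sup>+ q. 1 \<partial>\<alpha> x)"
  proof (intro nn_integral_cong)
    fix q :: "('a \<times> 'x) + unit"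
    have "(\<Sum>b\<in>UNIV. indicator {b} a :: ennreal) = 1" for a :: 'a
      by (simp add: indicator_def)
    then show "indicator {Inr ()} q + (\<Sum>b\<in>UNIV. letter_weight b (\<lambda>_. 1) q) = 1"
      by (cases q) (auto simp: letter_weight_def)
  qed
  finally show ?thesis by simp
qed

lemma tr_single_plus_sum_tr_cyl_s_Cons:
  "tr_single X \<alpha> (a # u) x + (\<Sum>b\<in>UNIV. tr_cyl_s X \<alpha> (a # u @ [b]) x)
    = (\<integral>\<^sup>+ y. tr_single X \<alpha> u y + (\<Sum>b\<in>UNIV. tr_cyl_s X \<alpha> (u @ [b]) y) \<partial>Pa_s X \<alpha> a x)"
  by (simp add: nn_integral_sum nn_integral_add borel_measurable_tr_single borel_measurable_tr_cyl_s
      borel_measurable_sum)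

lemma tr_single_plus_sum_tr_cyl_s_le:
  "x \<in> space X \<Longrightarrow> tr_single X \<alpha> u x + (\<Sum>b\<in>UNIV. tr_cyl_s X \<alpha> (u @ [b]) x) \<le> tr_cyl_s X \<alpha> u x"
proof (induction u arbitrary: x)
  case Nil
  show ?case
    unfolding append.simps(1) tr_single_plus_sum_tr_cyl_s_Nil[OF Nil] tr_cyl_s.simps(1)
    by (rule subprob_space.emeasure_space_le_1[OF subprob_space_kernel[OF \<alpha> Nil]])
next
  case (Cons a u)
  have "tr_single X \<alpha> (a # u) x + (\<Sum>b\<in>UNIV. tr_cyl_s X \<alpha> ((a # u) @ [b]) x)
    = (\<integral>\<^sup>+ y. tr_single X \<alpha> u y + (\<Sum>b\<in>UNIV. tr_cyl_s X \<alpha> (u @ [b]) y) \<partial>Pa_s X \<alpha> a x)"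
    by (simp only: append_Cons tr_single_plus_sum_tr_cyl_s_Cons)
  also have "\<dots> \<le> tr_cyl_s X \<alpha> (a # u) x"
    by (simp only: tr_cyl_s.simps) (intro nn_integral_mono, simp add: Cons.IH)
  finally show ?case .
qed

lemma tr_single_plus_sum_tr_cyl_s_eq:
  assumes prob: "\<And>x. x \<in> space X \<Longrightarrow> prob_space (\<alpha> x)"
  shows "x \<in> space X \<Longrightarrow> tr_single X \<alpha> u x + (\<Sum>b\<in>UNIV. tr_cyl_s X \<alpha> (u @ [b]) x) = tr_cyl_s X \<alpha> u x"
proof (induction u arbitrary: x)
  case Nil
  show ?case
    unfolding append.simps(1) tr_single_plus_sum_tr_cyl_s_Nil[OF Nil] tr_cyl_s.simps(1)
    by (rule prob_space.emeasure_space_1[OF prob[OF Nil]])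
next
  case (Cons a u)
  have "tr_single X \<alpha> (a # u) x + (\<Sum>b\<in>UNIV. tr_cyl_s X \<alpha> ((a # u) @ [b]) x)
    = (\<integral>\<^sup>+ y. tr_single X \<alpha> u y + (\<Sum>b\<in>UNIV. tr_cyl_s X \<alpha> (u @ [b]) y) \<partial>Pa_s X \<alpha> a x)"
    by (simp only: append_Cons tr_single_plus_sum_tr_cyl_s_Cons)
  also have "\<dots> = tr_cyl_s X \<alpha> (a # u) x"
    by (simp only: tr_cyl_s.simps) (intro nn_integral_cong, simp add: Cons.IH)
  finally show ?case .
qed

end

section \<open>Coding words by nested subintervals of [0,1)\<close>

text \<open>Given weights \<open>c u\<close> (for the cylinder of \<open>u\<close>) and \<open>d u\<close> (for the word \<open>u\<close> itself) with
  \<open>c [] = 1\<close> and \<open>d u + (\<Sum>b. c (u @ [b])) \<le> c u\<close>, the word \<open>u\<close> is assigned the interval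
  \<open>[lo u, lo u + c u)\<close>; it begins with \<open>[lo u, lo u + d u)\<close>, followed by the intervals of the
  words \<open>u @ [b]\<close> in the order of a fixed enumeration of the alphabet. Decoding a point \<open>t\<close> reads off the
  letters of the nested intervals containing \<open>t\<close> and stops as soon as \<open>t\<close> falls into the word part
  of an interval. Pushing Lebesgue measure forward along the decoding yields a measure on words
  with the prescribed masses.\<close>

definition alphabet_list :: "'a::finite list" where
  "alphabet_list = (SOME L. set L = UNIV \<and> distinct L)"

lemma set_alphabet_list: "set (alphabet_list :: 'a::finite list) = UNIV"
  and distinct_alphabet_list: "distinct (alphabet_list :: 'a::finite list)"
proof -
  have "\<exists>L. set L = (UNIV :: 'a set) \<and> distinct L" by (rule finite_distinct_list) simp
  then have "set (alphabet_list :: 'a list) = UNIV \<and> distinct (alphabet_list :: 'a list)"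
    unfolding alphabet_list_def by (rule someI_ex)
  then show "set (alphabet_list :: 'a::finite list) = UNIV" "distinct (alphabet_list :: 'a::finite list)"
    by auto
qed

fun list_offset :: "'a list \<Rightarrow> ('a \<Rightarrow> real) \<Rightarrow> 'a \<Rightarrow> real" where
  "list_offset [] w a = 0"
| "list_offset (b # bs) w a = (if b = a then 0 else w b + list_offset bs w a)"

fun list_pick :: "'a list \<Rightarrow> ('a \<Rightarrow> real) \<Rightarrow> real \<Rightarrow> 'a" where
  "list_pick [] w t = undefined"
| "list_pick (b # bs) w t = (if t < w b then b else list_pick bs w (t - w b))"

lemma list_offset_nonneg: "(\<And>b. 0 \<le> w b) \<Longrightarrow> 0 \<le> list_offset L w a"
  by (induction L) auto

lemma list_offset_add_le_sum_list:
  "a \<in> set L \<Longrightarrow> (\<And>b. 0 \<le> w b) \<Longrightarrow> list_offset L w a + w a \<le> sum_list (map w L)"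
proof (induction L)
  case (Cons b bs)
  have "0 \<le> sum_list (map w bs)" using Cons.prems(2) by (induction bs) (auto intro: add_nonneg_nonneg)
  with Cons show ?case by auto
qed simp

lemma list_pick_eq:
  "a \<in> set L \<Longrightarrow> (\<And>b. 0 \<le> w b) \<Longrightarrow> list_offset L w a \<le> t \<Longrightarrow> t < list_offset L w a + w a
    \<Longrightarrow> list_pick L w t = a"
proof (induction L arbitrary: t)
  case (Cons b bs)
  show ?case
  proof (cases "b = a")
    case False
    with Cons.prems have "a \<in> set bs" "w b + list_offset bs w a \<le> t" "t < w b + list_offset bs w a + w a"
      by auto
    moreover have "0 \<le> list_offset bs w a" using Cons.prems(2) by (rule list_offset_nonneg)
    ultimately show ?thesis using Cons.IH[of "t - w b"] Cons.prems(2) by auto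
  qed (use Cons.prems in simp)
qed simp

lemma list_pick_in_interval:
  "distinct L \<Longrightarrow> (\<And>b. 0 \<le> w b) \<Longrightarrow> 0 \<le> t \<Longrightarrow> t < sum_list (map w L) \<Longrightarrow>
   list_pick L w t \<in> set L \<and> list_offset L w (list_pick L w t) \<le> t \<and>
   t < list_offset L w (list_pick L w t) + w (list_pick L w t)"
proof (induction L arbitrary: t)
  case (Cons b bs)
  show ?case
  proof (cases "t < w b")
    case False
    then have "0 \<le> t - w b" "t - w b < sum_list (map w bs)" using Cons.prems by auto
    with Cons.IH[of "t - w b"] Cons.prems have "list_pick bs w (t - w b) \<in> set bs \<and>
      list_offset bs w (list_pick bs w (t - w b)) \<le> t - w b \<and>
      t - w b < list_offset bs w (list_pick bs w (t - w b)) + w (list_pick bs w (t - w b))"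
      by auto
    moreover from this have "list_pick bs w (t - w b) \<noteq> b" using Cons.prems(1) by auto
    ultimately show ?thesis using False by auto
  qed (use Cons.prems in simp)
qed simp

primrec code_lo_rev :: "('a::finite list \<Rightarrow> real) \<Rightarrow> ('a list \<Rightarrow> real) \<Rightarrow> 'a list \<Rightarrow> real" where
  "code_lo_rev c d [] = 0"
| "code_lo_rev c d (a # r) =
     code_lo_rev c d r + d (rev r) + list_offset alphabet_list (\<lambda>b. c (rev r @ [b])) a"

definition code_lo :: "('a::finite list \<Rightarrow> real) \<Rightarrow> ('a list \<Rightarrow> real) \<Rightarrow> 'a list \<Rightarrow> real" where
  "code_lo c d u = code_lo_rev c d (rev u)"

lemma code_lo_Nil[simp]: "code_lo c d [] = 0"
  by (simp add: code_lo_def)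

lemma code_lo_snoc[simp]:
  "code_lo c d (u @ [a]) = code_lo c d u + d u + list_offset alphabet_list (\<lambda>b. c (u @ [b])) a"
  by (simp add: code_lo_def)

definition code_next :: "('a::finite list \<Rightarrow> real) \<Rightarrow> ('a list \<Rightarrow> real) \<Rightarrow> 'a list \<Rightarrow> real \<Rightarrow> 'a" where
  "code_next c d u t = list_pick alphabet_list (\<lambda>b. c (u @ [b])) (t - code_lo c d u - d u)"

primrec code_prefix :: "('a::finite list \<Rightarrow> real) \<Rightarrow> ('a list \<Rightarrow> real) \<Rightarrow> nat \<Rightarrow> real \<Rightarrow> 'a list" where
  "code_prefix c d 0 t = []"
| "code_prefix c d (Suc n) t = code_prefix c d n t @ [code_next c d (code_prefix c d n t) t]"

definition code_stops :: "('a::finite list \<Rightarrow> real) \<Rightarrow> ('a list \<Rightarrow> real) \<Rightarrow> nat \<Rightarrow> real \<Rightarrow> bool" where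
  "code_stops c d n t \<longleftrightarrow>
     code_lo c d (code_prefix c d n t) \<le> t \<and> t < code_lo c d (code_prefix c d n t) + d (code_prefix c d n t)"

definition code_stream :: "('a::finite list \<Rightarrow> real) \<Rightarrow> ('a list \<Rightarrow> real) \<Rightarrow> real \<Rightarrow> 'a stream" where
  "code_stream c d t = smap (\<lambda>n. code_next c d (code_prefix c d n t) t) nats"

definition decode :: "('a::finite list \<Rightarrow> real) \<Rightarrow> ('a list \<Rightarrow> real) \<Rightarrow> real \<Rightarrow> 'a iword" where
  "decode c d t =
    (if \<exists>n. code_stops c d n t then Fin (code_prefix c d (LEAST n. code_stops c d n t) t)
     else Inf (code_stream c d t))"

lemma length_code_prefix[simp]: "length (code_prefix c d n t) = n"
  by (induction n) auto

lemma take_code_prefix: "m \<le> n \<Longrightarrow> take m (code_prefix c d n t) = code_prefix c d m t"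
proof (induction n)
  case (Suc n)
  then show ?case by (cases "m = Suc n") auto
qed simp

lemma stake_code_stream: "stake n (code_stream c d t) = code_prefix c d n t"
proof (induction n)
  case (Suc n)
  have "nats !! n = n" by (induction n) (simp_all add: snth_siterate)
  with Suc show ?case by (simp add: stake_Suc code_stream_def)
qed simp

locale interval_code =
  fixes c d :: "'a::finite list \<Rightarrow> real"
  assumes c_nonneg: "\<And>u. 0 \<le> c u" and d_nonneg: "\<And>u. 0 \<le> d u" and c_Nil: "c [] = 1"
    and split_le: "\<And>u. d u + (\<Sum>b\<in>UNIV. c (u @ [b])) \<le> c u"
begin

abbreviation cyl_ival :: "'a list \<Rightarrow> real set" where
  "cyl_ival u \<equiv> {code_lo c d u ..< code_lo c d u + c u}"

abbreviation word_ival :: "'a list \<Rightarrow> real set" where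
  "word_ival u \<equiv> {code_lo c d u ..< code_lo c d u + d u}"

lemma sum_list_children: "sum_list (map (\<lambda>b. c (u @ [b])) alphabet_list) = (\<Sum>b\<in>UNIV. c (u @ [b]))"
  using sum_list_distinct_conv_sum_set[OF distinct_alphabet_list, of "\<lambda>b. c (u @ [b])"]
  by (simp add: set_alphabet_list)

lemma code_lo_snoc_ge: "code_lo c d u + d u \<le> code_lo c d (u @ [a])"
  using list_offset_nonneg[of "\<lambda>b. c (u @ [b])"] c_nonneg by simp

lemma code_lo_snoc_add_le: "code_lo c d (u @ [a]) + c (u @ [a]) \<le> code_lo c d u + c u"
proof -
  have "list_offset alphabet_list (\<lambda>b. c (u @ [b])) a + c (u @ [a]) \<le> (\<Sum>b\<in>UNIV. c (u @ [b]))"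
    using list_offset_add_le_sum_list[of a alphabet_list "\<lambda>b. c (u @ [b])"] c_nonneg sum_list_children
    by (simp add: set_alphabet_list)
  then show ?thesis using split_le[of u] by simp
qed

lemma cyl_ival_snoc_subset: "cyl_ival (u @ [a]) \<subseteq> cyl_ival u"
  using code_lo_snoc_ge[of u a] code_lo_snoc_add_le[of u a] d_nonneg[of u] by auto

lemma word_ival_Int_cyl_ival_snoc: "word_ival u \<inter> cyl_ival (u @ [a]) = {}"
  using code_lo_snoc_ge[of u a] by auto

lemma word_ival_subset_cyl_ival: "word_ival u \<subseteq> cyl_ival u"
  using split_le[of u] sum_nonneg[of UNIV "\<lambda>b. c (u @ [b])"] c_nonneg by fastforce

lemma cyl_ival_subset_take: "cyl_ival u \<subseteq> cyl_ival (take m u)"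
proof (induction u rule: rev_induct)
  case (snoc a v)
  show ?case
  proof (cases "m \<le> length v")
    case True
    then have "take m (v @ [a]) = take m v" by simp
    then show ?thesis using snoc cyl_ival_snoc_subset[of v a] by auto
  qed simp
qed simp

lemma cyl_ival_subset_unit: "cyl_ival u \<subseteq> {0..<1}"
  using cyl_ival_subset_take[of u 0] c_Nil by simp

lemma word_ival_subset_unit: "word_ival u \<subseteq> {0..<1}"
  using cyl_ival_subset_unit word_ival_subset_cyl_ival by blast

lemma code_prefix_eq: "t \<in> cyl_ival u \<Longrightarrow> code_prefix c d (length u) t = u"
proof (induction u rule: rev_induct)
  case (snoc a v)
  then have v: "code_prefix c d (length v) t = v" using cyl_ival_snoc_subset by blast
  have "code_next c d v t = a" unfolding code_next_def
    using snoc.prems by (intro list_pick_eq) (auto simp: set_alphabet_list c_nonneg)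
  then show ?case using v by simp
qed simp

lemma not_code_stops_before: "t \<in> cyl_ival u \<Longrightarrow> m < length u \<Longrightarrow> \<not> code_stops c d m t"
proof
  assume t: "t \<in> cyl_ival u" and m: "m < length u" and stops: "code_stops c d m t"
  have "t \<in> cyl_ival (take m u)" using cyl_ival_subset_take t by blast
  then have "code_prefix c d m t = take m u" using code_prefix_eq[of t "take m u"] m by simp
  then have "t \<in> word_ival (take m u)" using stops by (simp add: code_stops_def)
  moreover have "t \<in> cyl_ival (take m u @ [u ! m])"
    using cyl_ival_subset_take[of u "Suc m"] t m by (auto simp: take_Suc_conv_app_nth)
  ultimately show False using word_ival_Int_cyl_ival_snoc by blast
qed

lemma decode_eq_Fin_iff: "decode c d t = Fin u \<longleftrightarrow> t \<in> word_ival u"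
proof
  assume dec: "decode c d t = Fin u"
  then have ex: "\<exists>n. code_stops c d n t" by (auto simp: decode_def split: if_splits)
  then have "code_stops c d (LEAST n. code_stops c d n t) t" by (rule LeastI_ex)
  then show "t \<in> word_ival u" using dec ex by (simp add: decode_def code_stops_def)
next
  assume t: "t \<in> word_ival u"
  then have t': "t \<in> cyl_ival u" using word_ival_subset_cyl_ival by blast
  then have p: "code_prefix c d (length u) t = u" by (rule code_prefix_eq)
  have stops: "code_stops c d (length u) t" using t by (simp add: code_stops_def p)
  have "(LEAST n. code_stops c d n t) = length u"
    using stops not_code_stops_before[OF t'] by (intro Least_equality) (auto simp: not_less[symmetric])
  then show "decode c d t = Fin u" using stops p by (auto simp: decode_def)
qed

end

text \<open>With exact splitting the intervals of the words of length \<open>n\<close> tile what is left of [0,1)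
  after the word parts of the shorter words, so decoding never gets stuck.\<close>

locale interval_code_exact = interval_code +
  assumes split_eq: "\<And>u. d u + (\<Sum>b\<in>UNIV. c (u @ [b])) = c u"
begin

lemma mem_cyl_ival_code_prefix:
  "t \<in> {0..<1} \<Longrightarrow> (\<forall>m<n. \<not> code_stops c d m t) \<Longrightarrow> t \<in> cyl_ival (code_prefix c d n t)"
proof (induction n)
  case 0 then show ?case using c_Nil by simp
next
  case (Suc n)
  let ?v = "code_prefix c d n t"
  have tv: "t \<in> cyl_ival ?v" using Suc by auto
  have "\<not> code_stops c d n t" using Suc.prems by auto
  then have "code_lo c d ?v + d ?v \<le> t" using tv by (auto simp: code_stops_def)
  moreover have "t - code_lo c d ?v - d ?v < sum_list (map (\<lambda>b. c (?v @ [b])) alphabet_list)"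
    using tv split_eq[of ?v] sum_list_children by simp
  ultimately show ?case
    using list_pick_in_interval[OF distinct_alphabet_list, of "\<lambda>b. c (?v @ [b])" "t - code_lo c d ?v - d ?v"]
    by (simp add: code_next_def c_nonneg)
qed

lemma decode_in_C_inf_iff:
  assumes t01: "t \<in> {0..<1}" shows "decode c d t \<in> C_inf u \<longleftrightarrow> t \<in> cyl_ival u"
proof (cases "\<exists>n. code_stops c d n t")
  case True
  let ?N = "LEAST n. code_stops c d n t"
  let ?w = "code_prefix c d ?N t"
  have dec: "decode c d t = Fin ?w" using True by (simp add: decode_def)
  show ?thesis
  proof
    assume "decode c d t \<in> C_inf u"
    then have "take (length u) ?w = u" by (auto simp: dec C_inf_def prefix_def)
    moreover have "t \<in> word_ival ?w" using dec by (simp add: decode_eq_Fin_iff)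
    then have "t \<in> cyl_ival ?w" using word_ival_subset_cyl_ival by blast
    ultimately show "t \<in> cyl_ival u" using cyl_ival_subset_take[of ?w "length u"] by simp
  next
    assume t: "t \<in> cyl_ival u"
    have "code_stops c d ?N t" using True by (rule LeastI_ex)
    then have "length u \<le> ?N" using not_code_stops_before[OF t, of ?N] by (auto simp: not_less[symmetric])
    then have "take (length u) ?w = u" by (simp add: take_code_prefix code_prefix_eq[OF t])
    then have "prefix u ?w" by (metis take_is_prefix)
    then show "decode c d t \<in> C_inf u" by (simp add: dec C_inf_def)
  qed
next
  case False
  then have "decode c d t \<in> C_inf u \<longleftrightarrow> code_prefix c d (length u) t = u"
    by (simp add: decode_def C_inf_def prefix_s_def stake_code_stream)
  also have "\<dots> \<longleftrightarrow> t \<in> cyl_ival u"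
    using code_prefix_eq mem_cyl_ival_code_prefix[OF t01, of "length u"] False by auto
  finally show ?thesis .
qed

end

section \<open>The spaces of words\<close>

lemma space_Omega_star[simp]: "space Omega_star = UNIV"
  unfolding Omega_star_def by (simp add: space_measure_of_conv)

lemma sets_Omega_star: "sets Omega_star = sigma_sets UNIV S_star"
  unfolding Omega_star_def by (simp add: sets_measure_of)

lemma singleton_in_sets_Omega_star[simp]: "{u} \<in> sets Omega_star"
  unfolding Omega_star_def by (rule in_measure_of) (auto simp: S_star_def)

lemma sets_Omega_star_eq_Pow: "sets (Omega_star :: 'a::finite list measure) = Pow UNIV"
proof -
  have "A \<in> sets (Omega_star :: 'a list measure)" for A
    using sets.countable_UN''[of A "\<lambda>u. {u}" "Omega_star :: 'a list measure"] by simp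
  then show ?thesis using sets.sets_into_space[of _ "Omega_star :: 'a list measure"] by auto
qed

lemma Int_stable_S_star: "Int_stable S_star"
  by (rule Int_stableI) (auto simp: S_star_def)

lemma measure_Omega_star_eqI:
  fixes M N :: "'a::finite list measure"
  assumes "sets M = sets Omega_star" "sets N = sets Omega_star"
    and "\<And>u. emeasure M {u} = emeasure N {u}"
  shows "M = N"
  by (rule measure_eqI_countable[where A=UNIV]) (use assms in \<open>simp_all add: sets_Omega_star_eq_Pow\<close>)

definition psi_star :: "('a \<times> 'a list) + unit \<Rightarrow> 'a list" where
  "psi_star q = (case q of Inl p \<Rightarrow> fst p # snd p | Inr u \<Rightarrow> [])"

lemma psi_phi_star: "psi_star (phi_star w) = w"
  by (cases w) (auto simp: psi_star_def)

lemma phi_psi_star: "phi_star (psi_star q) = q"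
  by (cases q) (auto simp: psi_star_def)

lemma vimage_psi_star_Nil: "psi_star -` {[]} = {Inr ()}"
  by (auto simp: psi_star_def split: sum.splits)

lemma vimage_psi_star_Cons: "psi_star -` {a # v} = Inl ` ({a} \<times> {v})"
  by (auto simp: psi_star_def split: sum.splits)

lemma space_Fs_Omega_star: "space (Fs (Omega_star :: 'a::finite list measure)) = UNIV"
  by (rule space_Fs_UNIV) simp

lemma measurable_psi_star: "psi_star \<in> measurable (Fs Omega_star) (Omega_star :: 'a::finite list measure)"
proof (rule measurable_sigma_sets[OF sets_Omega_star])
  fix A :: "'a list set" assume "A \<in> S_star"
  then consider "A = {}" | u where "A = {u}" by (auto simp: S_star_def)
  then show "psi_star -` A \<inter> space (Fs Omega_star) \<in> sets (Fs Omega_star)"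
  proof cases
    case (2 u) then show ?thesis
      by (cases u) (simp_all add: space_Fs_Omega_star vimage_psi_star_Nil vimage_psi_star_Cons
          Inr_in_sets_Fs Inl_singleton_in_sets_Fs)
  qed simp
qed (auto simp: S_star_def)

lemma measurable_phi_star: "phi_star \<in> measurable (Omega_star :: 'a::finite list measure) (Fs Omega_star)"
  by (auto simp: measurable_def sets_Omega_star_eq_Pow space_Fs_Omega_star)

lemma space_Omega_omega[simp]: "space Omega_omega = UNIV"
  unfolding Omega_omega_def by (simp add: space_measure_of_conv)

lemma sets_Omega_omega: "sets Omega_omega = sigma_sets UNIV S_omega"
  unfolding Omega_omega_def by (simp add: sets_measure_of)

lemma C_omega_in_sets[simp]: "C_omega u \<in> sets Omega_omega"
  unfolding Omega_omega_def by (rule in_measure_of) (auto simp: S_omega_def)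

lemma C_omega_Nil[simp]: "C_omega [] = UNIV"
  by (simp add: C_omega_def prefix_s_def)

lemma C_omega_Cons: "C_omega (a # u) = {s. shd s = a \<and> stl s \<in> C_omega u}"
  by (auto simp: C_omega_def prefix_s_def)

lemma C_omega_Int_C_omega: "C_omega u \<inter> C_omega v \<in> S_omega"
proof -
  have *: "C_omega u \<inter> C_omega v \<in> S_omega" if le: "length u \<le> length v" for u v :: "'b list"
  proof (cases "take (length u) v = u")
    case True
    then have "C_omega v \<subseteq> C_omega u"
      using le by (auto simp: C_omega_def prefix_s_def) (metis min.absorb1 take_stake)
    then show ?thesis by (auto simp: S_omega_def Int_absorb1)
  next
    case False
    then have "C_omega u \<inter> C_omega v = {}"
      using le by (auto simp: C_omega_def prefix_s_def) (metis min.absorb1 take_stake)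
    then show ?thesis by (simp add: S_omega_def)
  qed
  show ?thesis
    using *[of u v] *[of v u] by (cases "length u \<le> length v") (auto simp: Int_commute)
qed

lemma Int_stable_S_omega: "Int_stable S_omega"
  unfolding Int_stable_def using C_omega_Int_C_omega by (auto simp: S_omega_def)

lemma measure_Omega_omega_eqI:
  fixes M N :: "'a stream measure"
  assumes "sets M = sets Omega_omega" "sets N = sets Omega_omega" "finite_measure M"
    and "\<And>u. emeasure M (C_omega u) = emeasure N (C_omega u)"
  shows "M = N"
proof (rule measure_eqI_generator_eq[OF Int_stable_S_omega, where A="\<lambda>_. C_omega []"])
  show "sets M = sigma_sets UNIV S_omega" "sets N = sigma_sets UNIV S_omega"
    using assms by (simp_all add: sets_Omega_omega)
  show "emeasure M (C_omega []) \<noteq> \<infinity>"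
    using finite_measure.emeasure_finite[OF assms(3)] by simp
  show "range (\<lambda>_. C_omega []) \<subseteq> S_omega" unfolding S_omega_def by blast
qed (use assms(4) in \<open>auto simp: S_omega_def\<close>)

lemma measurable_shd_Omega_omega: "shd \<in> measurable (Omega_omega :: 'a::finite stream measure) Alph"
proof -
  have "shd -` {a} = C_omega [a]" for a :: 'a by (auto simp: C_omega_Cons)
  then show ?thesis unfolding measurable_count_space_eq2_countable by simp
qed

lemma measurable_stl_Omega_omega: "stl \<in> measurable (Omega_omega :: 'a::finite stream measure) Omega_omega"
proof (rule measurable_sigma_sets[OF sets_Omega_omega])
  fix A :: "'a stream set" assume "A \<in> S_omega"
  then obtain u where "A = {} \<or> A = C_omega u" by (auto simp: S_omega_def)
  moreover have "stl -` C_omega u = (\<Union>a. C_omega (a # u))" by (auto simp: C_omega_Cons)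
  moreover have "(\<Union>a. C_omega (a # u)) \<in> sets (Omega_omega :: 'a stream measure)"
    by (intro sets.finite_UN) auto
  ultimately show "stl -` A \<inter> space Omega_omega \<in> sets Omega_omega" by auto
qed (auto simp: S_omega_def)

lemma measurable_phi_omega: "phi_omega \<in> measurable (Omega_omega :: 'a::finite stream measure) (Fp Omega_omega)"
  unfolding phi_omega_def Fp_def
  by (intro measurable_Pair measurable_shd_Omega_omega measurable_stl_Omega_omega)

definition psi_omega :: "'a \<times> 'a stream \<Rightarrow> 'a stream" where
  "psi_omega p = fst p ## snd p"

lemma psi_phi_omega: "psi_omega (phi_omega w) = w"
  by (simp add: psi_omega_def phi_omega_def)

lemma phi_psi_omega: "phi_omega (psi_omega q) = q"
  by (simp add: psi_omega_def phi_omega_def)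

lemma vimage_psi_omega_C_omega_Cons: "psi_omega -` C_omega (a # v) = {a} \<times> C_omega v"
  by (auto simp: psi_omega_def C_omega_Cons)

lemma measurable_psi_omega: "psi_omega \<in> measurable (Fp Omega_omega) (Omega_omega :: 'a::finite stream measure)"
proof (rule measurable_sigma_sets[OF sets_Omega_omega])
  fix A :: "'a stream set" assume "A \<in> S_omega"
  then consider "A = {}" | u where "A = C_omega u" by (auto simp: S_omega_def)
  then show "psi_omega -` A \<inter> space (Fp Omega_omega) \<in> sets (Fp Omega_omega)"
  proof cases
    case (2 u) then show ?thesis
      by (cases u) (simp_all add: vimage_psi_omega_C_omega_Cons space_Fp Fp_def)
  qed simp
qed (auto simp: S_omega_def space_Fp)

lemma space_Omega_inf[simp]: "space Omega_inf = UNIV"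
  unfolding Omega_inf_def by (simp add: space_measure_of_conv)

lemma sets_Omega_inf: "sets Omega_inf = sigma_sets UNIV S_inf"
  unfolding Omega_inf_def by (simp add: sets_measure_of)

lemma C_inf_in_sets[simp]: "C_inf u \<in> sets Omega_inf"
  unfolding Omega_inf_def by (rule in_measure_of) (auto simp: S_inf_def)

lemma Fin_in_sets[simp]: "{Fin u} \<in> sets Omega_inf"
  unfolding Omega_inf_def by (rule in_measure_of) (auto simp: S_inf_def)

lemma subset_Fin_Nil_in_sets: "A \<subseteq> {Fin []} \<Longrightarrow> A \<in> sets Omega_inf"
  by (cases "A = {}") (auto simp: subset_singleton_iff)

lemma prefix_i_Nil[simp]: "prefix_i [] w"
  by (cases w) (auto simp: prefix_s_def)

lemma C_inf_Nil[simp]: "C_inf [] = UNIV"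
  by (auto simp: C_inf_def)

fun hd_i :: "'a iword \<Rightarrow> 'a" where
  "hd_i (Fin []) = undefined" | "hd_i (Fin (a # u)) = a" | "hd_i (Inf s) = shd s"

fun tl_i :: "'a iword \<Rightarrow> 'a iword" where
  "tl_i (Fin []) = Fin []" | "tl_i (Fin (a # u)) = Fin u" | "tl_i (Inf s) = Inf (stl s)"

fun cons_i :: "'a \<Rightarrow> 'a iword \<Rightarrow> 'a iword" where
  "cons_i a (Fin u) = Fin (a # u)" | "cons_i a (Inf s) = Inf (a ## s)"

lemma prefix_i_Cons: "prefix_i (a # u) w \<longleftrightarrow> w \<noteq> Fin [] \<and> hd_i w = a \<and> prefix_i u (tl_i w)"
  by (cases w rule: tl_i.cases) (auto simp: prefix_s_def)

lemma prefix_i_cons_i: "prefix_i (a # u) (cons_i b w) \<longleftrightarrow> a = b \<and> prefix_i u w"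
  by (cases w) (auto simp: prefix_s_def)

lemma phi_inf_eq: "phi_inf w = (if w = Fin [] then Inr () else Inl (hd_i w, tl_i w))"
  by (cases w rule: phi_inf.cases) auto

lemma prefix_i_comparable:
  assumes "prefix_i u w" "prefix_i v w" "length u \<le> length v" shows "prefix u v"
proof (cases w)
  case (Fin l)
  then have "prefix u l" "prefix v l" using assms by auto
  then have "prefix u v \<or> prefix v u" by (rule prefix_same_cases)
  then show ?thesis using assms(3) prefix_length_le[of v u] by (metis prefix_length_prefix prefix_order.eq_iff)
next
  case (Inf s)
  then have "stake (length u) s = u" "stake (length v) s = v" using assms by (auto simp: prefix_s_def)
  then have "take (length u) v = u" using assms(3) by (metis min.absorb1 take_stake)
  then show ?thesis by (metis take_is_prefix)
qed

lemma prefix_i_trans: "prefix u v \<Longrightarrow> prefix_i v w \<Longrightarrow> prefix_i u w"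
proof (cases w)
  case (Inf s)
  assume "prefix u v" "prefix_i v w"
  then obtain z where "v = u @ z" "stake (length v) s = v" using Inf by (auto simp: prefix_def prefix_s_def)
  then have "stake (length u) s = u" by (metis append_eq_conv_conj length_append min_def take_stake le_add1)
  then show ?thesis using Inf by (simp add: prefix_s_def)
qed (auto dest: prefix_order.trans)

lemma C_inf_Int_C_inf: "C_inf u \<inter> C_inf v \<in> S_inf"
proof -
  have *: "C_inf u \<inter> C_inf v \<in> S_inf" if le: "length u \<le> length v" for u v :: "'b list"
  proof (cases "prefix u v")
    case True
    then have "C_inf v \<subseteq> C_inf u" by (auto simp: C_inf_def intro: prefix_i_trans)
    then show ?thesis by (auto simp: S_inf_def Int_absorb1)
  next
    case False
    then have "C_inf u \<inter> C_inf v = {}" using prefix_i_comparable[OF _ _ le] by (auto simp: C_inf_def)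
    then show ?thesis by (simp add: S_inf_def)
  qed
  show ?thesis
    using *[of u v] *[of v u] by (cases "length u \<le> length v") (auto simp: Int_commute)
qed

lemma Int_stable_S_inf: "Int_stable S_inf"
proof (rule Int_stableI)
  fix A B :: "'a iword set" assume "A \<in> S_inf" "B \<in> S_inf"
  then consider "A = {} \<or> B = {}" | u v where "A = {Fin u}" "B = {Fin v}"
    | u v where "A = {Fin u}" "B = C_inf v" | u v where "A = C_inf u" "B = {Fin v}"
    | u v where "A = C_inf u" "B = C_inf v"
    by (auto simp: S_inf_def)
  then show "A \<inter> B \<in> S_inf"
  proof cases
    case (2 u v) then show ?thesis by (cases "u = v") (auto simp: S_inf_def)
  next
    case (3 u v) then show ?thesis by (cases "Fin u \<in> C_inf v") (auto simp: S_inf_def)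
  next
    case (4 u v) then show ?thesis by (cases "Fin v \<in> C_inf u") (auto simp: S_inf_def)
  next
    case (5 u v) then show ?thesis using C_inf_Int_C_inf by simp
  qed (auto simp: S_inf_def)
qed

lemma measure_Omega_inf_eqI:
  fixes M N :: "'a iword measure"
  assumes "sets M = sets Omega_inf" "sets N = sets Omega_inf" "finite_measure M"
    and "\<And>u. emeasure M (C_inf u) = emeasure N (C_inf u)"
    and "\<And>u. emeasure M {Fin u} = emeasure N {Fin u}"
  shows "M = N"
proof (rule measure_eqI_generator_eq[OF Int_stable_S_inf, where A="\<lambda>_. C_inf []"])
  show "sets M = sigma_sets UNIV S_inf" "sets N = sigma_sets UNIV S_inf"
    using assms by (simp_all add: sets_Omega_inf)
  show "emeasure M (C_inf []) \<noteq> \<infinity>"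
    using finite_measure.emeasure_finite[OF assms(3)] by simp
  show "range (\<lambda>_. C_inf []) \<subseteq> S_inf" unfolding S_inf_def by blast
qed (use assms(4,5) in \<open>auto simp: S_inf_def\<close>)

lemma measurable_hd_i: "hd_i \<in> measurable (Omega_inf :: 'a::finite iword measure) Alph"
proof -
  have "hd_i -` {a} = C_inf [a] \<union> ({Fin []} \<inter> hd_i -` {a})" for a :: 'a
    by (auto simp: C_inf_def prefix_i_Cons)
  moreover have "C_inf [a] \<union> ({Fin []} \<inter> hd_i -` {a}) \<in> sets Omega_inf" for a :: 'a
    by (intro sets.Un C_inf_in_sets subset_Fin_Nil_in_sets) blast
  ultimately show ?thesis unfolding measurable_count_space_eq2_countable by simp
qed

lemma measurable_tl_i: "tl_i \<in> measurable (Omega_inf :: 'a::finite iword measure) Omega_inf"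
proof (rule measurable_sigma_sets[OF sets_Omega_inf])
  have Fin_Nil: "{Fin []} \<inter> tl_i -` A \<in> sets Omega_inf" for A :: "'a iword set"
    by (rule subset_Fin_Nil_in_sets) blast
  fix A :: "'a iword set" assume "A \<in> S_inf"
  then consider "A = {}" | u where "A = {Fin u}" | u where "A = C_inf u" by (auto simp: S_inf_def)
  then show "tl_i -` A \<inter> space Omega_inf \<in> sets Omega_inf"
  proof cases
    case (2 u)
    have eq: "tl_i -` A = (\<Union>a. {Fin (a # u)}) \<union> ({Fin []} \<inter> tl_i -` A)"
      unfolding 2 by (auto elim: tl_i.elims)
    have "(\<Union>a. {Fin (a # u)}) \<in> sets (Omega_inf :: 'a iword measure)" by (intro sets.finite_UN) auto
    then show ?thesis by (simp only: space_Omega_inf Int_UNIV_right) (subst eq, rule sets.Un[OF _ Fin_Nil])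
  next
    case (3 u)
    have eq: "tl_i -` A = (\<Union>a. C_inf (a # u)) \<union> ({Fin []} \<inter> tl_i -` A)"
      unfolding 3 by (auto simp: C_inf_def prefix_i_Cons)
    have "(\<Union>a. C_inf (a # u)) \<in> sets (Omega_inf :: 'a iword measure)" by (intro sets.finite_UN) auto
    then show ?thesis by (simp only: space_Omega_inf Int_UNIV_right) (subst eq, rule sets.Un[OF _ Fin_Nil])
  qed simp
qed (auto simp: S_inf_def)

lemma measurable_phi_inf: "phi_inf \<in> measurable (Omega_inf :: 'a::finite iword measure) (Fs Omega_inf)"
  unfolding Fs_def
proof (rule measurable_to_sum_meas)
  show "phi_inf \<in> space Omega_inf \<rightarrow> Inl ` space (Alph \<Otimes>\<^sub>M Omega_inf) \<union> Inr ` space One"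
    by (auto simp: phi_inf_eq space_pair_measure)
  fix A :: "('a \<times> 'a iword) set" and B :: "unit set"
  assume A: "A \<in> sets (Alph \<Otimes>\<^sub>M Omega_inf)"
  have "(\<lambda>w. (hd_i w, tl_i w)) \<in> measurable Omega_inf (Alph \<Otimes>\<^sub>M (Omega_inf :: 'a iword measure))"
    by (intro measurable_Pair measurable_hd_i measurable_tl_i)
  from measurable_sets[OF this A] have P: "(\<lambda>w. (hd_i w, tl_i w)) -` A \<in> sets Omega_inf"
    by simp
  have "phi_inf -` (Inl ` A \<union> Inr ` B) \<inter> space Omega_inf =
     ((\<lambda>w. (hd_i w, tl_i w)) -` A - {Fin []}) \<union> ({Fin []} \<inter> {w. () \<in> B})"
  proof (intro set_eqI)
    fix w :: "'a iword"
    show "w \<in> phi_inf -` (Inl ` A \<union> Inr ` B) \<inter> space Omega_inf \<longleftrightarrow>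
      w \<in> ((\<lambda>w. (hd_i w, tl_i w)) -` A - {Fin []}) \<union> ({Fin []} \<inter> {w. () \<in> B})"
      by (cases "w = Fin []") (auto simp: phi_inf_eq)
  qed
  moreover have "{Fin []} \<inter> {w. () \<in> B} \<in> sets (Omega_inf :: 'a iword measure)"
    by (rule subset_Fin_Nil_in_sets) blast
  ultimately show "phi_inf -` (Inl ` A \<union> Inr ` B) \<inter> space Omega_inf \<in> sets Omega_inf"
    using sets.Un[OF sets.Diff[OF P Fin_in_sets]] by (simp only:)
qed

definition psi_inf :: "('a \<times> 'a iword) + unit \<Rightarrow> 'a iword" where
  "psi_inf q = (case q of Inl p \<Rightarrow> cons_i (fst p) (snd p) | Inr u \<Rightarrow> Fin [])"

lemma psi_phi_inf: "psi_inf (phi_inf w) = w"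
  by (cases w rule: phi_inf.cases) (auto simp: psi_inf_def)

lemma phi_psi_inf: "phi_inf (psi_inf q) = q"
proof (cases q)
  case (Inl p) then show ?thesis by (cases p; cases "snd p") (auto simp: psi_inf_def)
qed (simp add: psi_inf_def)

lemma vimage_psi_inf_Fin_Nil: "psi_inf -` {Fin []} = {Inr ()}"
  by (auto simp: psi_inf_def split: sum.splits elim: cons_i.elims)

lemma vimage_psi_inf_Fin_Cons: "psi_inf -` {Fin (a # v)} = Inl ` ({a} \<times> {Fin v})"
proof (intro set_eqI iffI)
  fix q :: "('a \<times> 'a iword) + unit" assume q: "q \<in> psi_inf -` {Fin (a # v)}"
  then show "q \<in> Inl ` ({a} \<times> {Fin v})"
    by (cases q) (auto simp: psi_inf_def elim!: cons_i.elims)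
qed (auto simp: psi_inf_def)

lemma vimage_psi_inf_C_inf_Cons: "psi_inf -` C_inf (a # v) = Inl ` ({a} \<times> C_inf v)"
proof (intro set_eqI iffI)
  fix q :: "('a \<times> 'a iword) + unit" assume q: "q \<in> psi_inf -` C_inf (a # v)"
  then show "q \<in> Inl ` ({a} \<times> C_inf v)"
    by (cases q) (auto simp: psi_inf_def C_inf_def prefix_i_cons_i)
qed (auto simp: psi_inf_def C_inf_def prefix_i_cons_i)

lemma space_Fs_Omega_inf: "space (Fs (Omega_inf :: 'a::finite iword measure)) = UNIV"
  by (rule space_Fs_UNIV) simp

lemma measurable_psi_inf: "psi_inf \<in> measurable (Fs Omega_inf) (Omega_inf :: 'a::finite iword measure)"
proof (rule measurable_sigma_sets[OF sets_Omega_inf])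
  fix A :: "'a iword set" assume "A \<in> S_inf"
  then consider "A = {}" | u where "A = {Fin u}" | u where "A = C_inf u" by (auto simp: S_inf_def)
  then show "psi_inf -` A \<inter> space (Fs Omega_inf) \<in> sets (Fs Omega_inf)"
  proof cases
    case (2 u) then show ?thesis
      by (cases u) (simp_all add: space_Fs_Omega_inf vimage_psi_inf_Fin_Nil vimage_psi_inf_Fin_Cons
          Inr_in_sets_Fs Inl_singleton_in_sets_Fs)
  next
    case (3 u) show ?thesis
    proof (cases u)
      case Nil
      then show ?thesis using 3 by simp
    next
      case (Cons a v)
      then show ?thesis using 3 by (simp add: space_Fs_Omega_inf vimage_psi_inf_C_inf_Cons Inl_in_sets_Fs)
    qed
  qed simp
qed (auto simp: S_inf_def)

section \<open>Measures on words from interval codes\<close>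

definition lebesgue01 :: "real measure" where
  "lebesgue01 = restrict_space lborel {0..<1}"

lemma space_lebesgue01: "space lebesgue01 = {0..<1}"
  by (simp add: lebesgue01_def space_restrict_space)

lemma Ico_in_sets_lebesgue01: "{l..<r} \<subseteq> {0..<1} \<Longrightarrow> {l..<r} \<in> sets lebesgue01"
  unfolding lebesgue01_def by (subst sets_restrict_space_iff) auto

lemma emeasure_lebesgue01_Ico:
  "{l..<l + r} \<subseteq> {0..<1} \<Longrightarrow> 0 \<le> r \<Longrightarrow> emeasure lebesgue01 {l..<l + r} = ennreal r"
  unfolding lebesgue01_def by (subst emeasure_restrict_space) auto

definition code_measure :: "('a::finite list \<Rightarrow> real) \<Rightarrow> ('a list \<Rightarrow> real) \<Rightarrow> 'a iword measure" where
  "code_measure c d = distr lebesgue01 Omega_inf (decode c d)"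

definition code_stream_measure :: "('a::finite list \<Rightarrow> real) \<Rightarrow> ('a list \<Rightarrow> real) \<Rightarrow> 'a stream measure" where
  "code_stream_measure c d = distr lebesgue01 Omega_omega (code_stream c d)"

text \<open>The measure on finite words only sees the points of [0,1) at which decoding stops, so the
  fallback value \<open>[]\<close> for non-stopping points is never used.\<close>

definition code_word_measure :: "('a::finite list \<Rightarrow> real) \<Rightarrow> ('a list \<Rightarrow> real) \<Rightarrow> 'a list measure" where
  "code_word_measure c d =
     distr (restrict_space lborel (\<Union>u. {code_lo c d u ..< code_lo c d u + d u})) Omega_star
       (\<lambda>t. case decode c d t of Fin u \<Rightarrow> u | Inf _ \<Rightarrow> [])"

lemma sets_code_measure[simp]: "sets (code_measure c d) = sets Omega_inf"
  by (simp add: code_measure_def)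

lemma sets_code_stream_measure[simp]: "sets (code_stream_measure c d) = sets Omega_omega"
  by (simp add: code_stream_measure_def)

lemma sets_code_word_measure[simp]: "sets (code_word_measure c d) = sets Omega_star"
  by (simp add: code_word_measure_def)

lemma enn_weights_le_1:
  fixes C D :: "'a::finite list \<Rightarrow> ennreal"
  assumes Nil: "C [] = 1" and split: "\<And>u. D u + (\<Sum>b\<in>UNIV. C (u @ [b])) \<le> C u"
  shows "C u \<le> 1" and "D u \<le> 1"
proof -
  have le: "C (u @ [a]) \<le> C u" for u a
  proof -
    have "C (u @ [a]) \<le> (\<Sum>b\<in>UNIV. C (u @ [b]))" by (rule member_le_sum) simp_all
    also have "\<dots> \<le> D u + (\<Sum>b\<in>UNIV. C (u @ [b]))" by (rule add_increasing) simp_all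
    also have "\<dots> \<le> C u" by (rule split)
    finally show ?thesis .
  qed
  show C: "C u \<le> 1" for u
    by (induction u rule: rev_induct) (use Nil le in \<open>auto intro: order_trans\<close>)
  have "D u \<le> D u + (\<Sum>b\<in>UNIV. C (u @ [b]))" by (rule add_increasing2) simp_all
  then show "D u \<le> 1" using split[of u] C[of u] by (meson order_trans)
qed

lemma interval_code_enn2real:
  fixes C D :: "'a::finite list \<Rightarrow> ennreal"
  assumes Nil: "C [] = 1" and split: "\<And>u. D u + (\<Sum>b\<in>UNIV. C (u @ [b])) \<le> C u"
  shows "interval_code (\<lambda>u. enn2real (C u)) (\<lambda>u. enn2real (D u))"
    and "(\<And>u. D u + (\<Sum>b\<in>UNIV. C (u @ [b])) = C u) \<Longrightarrow>
      interval_code_exact (\<lambda>u. enn2real (C u)) (\<lambda>u. enn2real (D u))"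
proof -
  have fin: "C u < \<top>" "D u < \<top>" for u
    using enn_weights_le_1[OF Nil split] by (auto intro: le_less_trans[of _ 1])
  have real: "enn2real (D u) + (\<Sum>b\<in>UNIV. enn2real (C (u @ [b]))) = enn2real (D u + (\<Sum>b\<in>UNIV. C (u @ [b])))"
    for u using fin by (simp add: enn2real_plus enn2real_sum)
  show code: "interval_code (\<lambda>u. enn2real (C u)) (\<lambda>u. enn2real (D u))"
    by unfold_locales (use Nil fin split in \<open>simp_all add: real enn2real_mono\<close>)
  show "interval_code_exact (\<lambda>u. enn2real (C u)) (\<lambda>u. enn2real (D u))"
    if "\<And>u. D u + (\<Sum>b\<in>UNIV. C (u @ [b])) = C u"
    using code by (simp add: interval_code_exact_def interval_code_exact_axioms_def real that)
qed

context interval_code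
begin

lemma vimage_decode_Fin: "decode c d -` {Fin u} \<inter> {0..<1} = word_ival u"
  using decode_eq_Fin_iff word_ival_subset_unit by blast

lemma word_ivals_in_sets_lborel: "(\<Union>u. word_ival u) \<in> sets lborel"
  by (intro sets.countable_UN'') auto

lemma measurable_decode_word:
  "(\<lambda>t. case decode c d t of Fin u \<Rightarrow> u | Inf _ \<Rightarrow> [])
     \<in> measurable (restrict_space lborel (\<Union>u. word_ival u)) Omega_star"
  and vimage_decode_word:
  "(\<lambda>t. case decode c d t of Fin u \<Rightarrow> u | Inf _ \<Rightarrow> []) -` {u} \<inter> (\<Union>u. word_ival u) = word_ival u"
proof -
  let ?W = "\<Union>u. word_ival u" and ?f = "\<lambda>t. case decode c d t of Fin u \<Rightarrow> u | Inf _ \<Rightarrow> []"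
  show vimage: "?f -` {u} \<inter> ?W = word_ival u" for u
  proof (intro set_eqI iffI)
    fix t assume "t \<in> ?f -` {u} \<inter> ?W"
    then obtain w where "t \<in> word_ival w" "?f t = u" by auto
    then show "t \<in> word_ival u" using decode_eq_Fin_iff[of t w] by auto
  next
    fix t assume "t \<in> word_ival u"
    then show "t \<in> ?f -` {u} \<inter> ?W" using decode_eq_Fin_iff[of t u] by auto
  qed
  have W: "?W \<inter> space lborel \<in> sets lborel" using word_ivals_in_sets_lborel by simp
  show "?f \<in> measurable (restrict_space lborel ?W) Omega_star"
  proof (rule measurable_sigma_sets[OF sets_Omega_star])
    fix A :: "'a list set" assume "A \<in> S_star"
    then consider "A = {}" | u where "A = {u}" by (auto simp: S_star_def)
    then show "?f -` A \<inter> space (restrict_space lborel ?W) \<in> sets (restrict_space lborel ?W)"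
      by cases (auto simp: space_restrict_space sets_restrict_space_iff[OF W] vimage)
  qed (auto simp: S_star_def space_restrict_space)
qed

lemma emeasure_code_word_measure: "emeasure (code_word_measure c d) {u} = d u"
proof -
  have W: "(\<Union>u. word_ival u) \<inter> space lborel \<in> sets lborel"
    using word_ivals_in_sets_lborel by simp
  have "emeasure (code_word_measure c d) {u}
      = emeasure (restrict_space lborel (\<Union>u. word_ival u)) (word_ival u)"
    unfolding code_word_measure_def
    by (simp add: emeasure_distr[OF measurable_decode_word] space_restrict_space vimage_decode_word)
  also have "\<dots> = emeasure lborel (word_ival u)" by (rule emeasure_restrict_space[OF W]) auto
  finally show ?thesis by (simp add: d_nonneg)
qed

lemma subprob_space_code_word_measure: "subprob_space (code_word_measure c d)"
proof
  have W: "(\<Union>u. word_ival u) \<inter> space lborel \<in> sets lborel"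
    using word_ivals_in_sets_lborel by simp
  have "emeasure (code_word_measure c d) (space (code_word_measure c d))
      = emeasure (restrict_space lborel (\<Union>u. word_ival u)) (\<Union>u. word_ival u)"
    unfolding code_word_measure_def
    using emeasure_distr[OF measurable_decode_word sets.top] by (simp add: space_restrict_space)
  also have "\<dots> = emeasure lborel (\<Union>u. word_ival u)" by (rule emeasure_restrict_space[OF W]) auto
  also have "\<dots> \<le> emeasure lborel {0..<1::real}"
    using word_ival_subset_unit by (intro emeasure_mono) (blast, simp)
  finally show "emeasure (code_word_measure c d) (space (code_word_measure c d)) \<le> 1" by simp
qed (simp add: code_word_measure_def)

end

context interval_code_exact
begin

lemma vimage_decode_C_inf: "decode c d -` C_inf u \<inter> {0..<1} = cyl_ival u"
proof (intro set_eqI iffI)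
  fix t assume "t \<in> decode c d -` C_inf u \<inter> {0..<1}"
  then show "t \<in> cyl_ival u" using decode_in_C_inf_iff by blast
next
  fix t assume t: "t \<in> cyl_ival u"
  then have "t \<in> {0..<1}" using cyl_ival_subset_unit by blast
  with t show "t \<in> decode c d -` C_inf u \<inter> {0..<1}" using decode_in_C_inf_iff by blast
qed

lemma measurable_decode: "decode c d \<in> measurable lebesgue01 Omega_inf"
proof (rule measurable_sigma_sets[OF sets_Omega_inf])
  fix A :: "'a iword set" assume "A \<in> S_inf"
  then consider "A = {}" | u where "A = {Fin u}" | u where "A = C_inf u" by (auto simp: S_inf_def)
  then show "decode c d -` A \<inter> space lebesgue01 \<in> sets lebesgue01"
  proof cases
    case (2 u) then show ?thesis
      using word_ival_subset_unit by (simp add: space_lebesgue01 vimage_decode_Fin Ico_in_sets_lebesgue01)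
  next
    case (3 u) then show ?thesis
      using cyl_ival_subset_unit by (simp add: space_lebesgue01 vimage_decode_C_inf Ico_in_sets_lebesgue01)
  qed simp
qed (auto simp: S_inf_def)

lemma emeasure_code_measure_C_inf: "emeasure (code_measure c d) (C_inf u) = c u"
  unfolding code_measure_def using cyl_ival_subset_unit
  by (simp add: emeasure_distr[OF measurable_decode] space_lebesgue01 vimage_decode_C_inf
      emeasure_lebesgue01_Ico c_nonneg)

lemma emeasure_code_measure_Fin: "emeasure (code_measure c d) {Fin u} = d u"
  unfolding code_measure_def using word_ival_subset_unit
  by (simp add: emeasure_distr[OF measurable_decode] space_lebesgue01 vimage_decode_Fin
      emeasure_lebesgue01_Ico d_nonneg)

lemma prob_space_code_measure: "prob_space (code_measure c d)"
proof
  have "space (code_measure c d) = C_inf []" by (simp add: code_measure_def)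
  then show "emeasure (code_measure c d) (space (code_measure c d)) = 1"
    using emeasure_code_measure_C_inf[of "[]"] c_Nil by simp
qed

text \<open>Without mass on finite words decoding never stops, so it is already described by the
  stream of letters.\<close>

lemma code_stream_in_C_omega_iff:
  assumes d: "\<And>u. d u = 0" and t: "t \<in> {0..<1}"
  shows "code_stream c d t \<in> C_omega u \<longleftrightarrow> t \<in> cyl_ival u"
proof -
  have "\<not> code_stops c d n t" for n by (simp add: code_stops_def d)
  then have "decode c d t = Inf (code_stream c d t)" by (simp add: decode_def)
  then show ?thesis
    using decode_in_C_inf_iff[OF t, of u] by (simp add: C_inf_def C_omega_def)
qed

lemma vimage_code_stream_C_omega:
  assumes d: "\<And>u. d u = 0" shows "code_stream c d -` C_omega u \<inter> {0..<1} = cyl_ival u"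
proof (intro set_eqI iffI)
  fix t assume "t \<in> code_stream c d -` C_omega u \<inter> {0..<1}"
  then show "t \<in> cyl_ival u" using code_stream_in_C_omega_iff[OF d] by blast
next
  fix t assume t: "t \<in> cyl_ival u"
  then have "t \<in> {0..<1}" using cyl_ival_subset_unit by blast
  with t show "t \<in> code_stream c d -` C_omega u \<inter> {0..<1}" using code_stream_in_C_omega_iff[OF d] by blast
qed

lemma measurable_code_stream:
  assumes d: "\<And>u. d u = 0" shows "code_stream c d \<in> measurable lebesgue01 Omega_omega"
proof (rule measurable_sigma_sets[OF sets_Omega_omega])
  fix A :: "'a stream set" assume "A \<in> S_omega"
  then obtain u where "A = {} \<or> A = C_omega u" by (auto simp: S_omega_def)
  moreover have "code_stream c d -` C_omega u \<inter> space lebesgue01 = cyl_ival u"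
    unfolding space_lebesgue01 by (rule vimage_code_stream_C_omega[OF d])
  ultimately show "code_stream c d -` A \<inter> space lebesgue01 \<in> sets lebesgue01"
    using cyl_ival_subset_unit[of u] by (auto simp: Ico_in_sets_lebesgue01)
qed (auto simp: S_omega_def)

lemma emeasure_code_stream_measure:
  assumes d: "\<And>u. d u = 0" shows "emeasure (code_stream_measure c d) (C_omega u) = c u"
  unfolding code_stream_measure_def using cyl_ival_subset_unit
  by (simp add: emeasure_distr[OF measurable_code_stream[OF d]] space_lebesgue01
      vimage_code_stream_C_omega[OF d] emeasure_lebesgue01_Ico c_nonneg)

lemma prob_space_code_stream_measure:
  assumes d: "\<And>u. d u = 0" shows "prob_space (code_stream_measure c d)"
proof
  have "space (code_stream_measure c d) = C_omega []" by (simp add: code_stream_measure_def)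
  then show "emeasure (code_stream_measure c d) (space (code_stream_measure c d)) = 1"
    using emeasure_code_stream_measure[OF d, of "[]"] c_Nil by simp
qed

end

section \<open>Finality\<close>

subsection \<open>Type \<open>\<omega>\<close>: probability measures on infinite words\<close>

lemma measurable_kappa_omega:
  "kappa_omega \<in> measurable Omega_omega (prob_algebra (Fp Omega_omega :: ('a::finite \<times> 'a stream) measure))"
  unfolding kappa_omega_def[abs_def]
  by (rule measurable_compose[OF measurable_phi_omega measurable_return_prob_space])

definition trace_omega :: "'x measure \<Rightarrow> ('x \<Rightarrow> ('a::finite \<times> 'x) measure) \<Rightarrow> 'x \<Rightarrow> 'a stream measure" where
  "trace_omega X \<alpha> x = code_stream_measure (\<lambda>u. enn2real (tr_cyl_p X \<alpha> u x)) (\<lambda>_. 0)"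

context
  fixes X :: "'x measure" and \<alpha> :: "'x \<Rightarrow> ('a::finite \<times> 'x) measure"
  assumes \<alpha>: "\<alpha> \<in> measurable X (PP (Fp X))"
begin

lemma prob_kernel_omega: "\<alpha> \<in> measurable X (prob_algebra (Fp X))"
  using \<alpha> by (simp add: measurable_PP)

lemma prob_kernel_omega_at: "x \<in> space X \<Longrightarrow> prob_space (\<alpha> x) \<and> sets (\<alpha> x) = sets (Fp X)"
  using measurable_space[OF prob_kernel_omega] by (auto simp: space_prob_algebra)

lemma is_hom_omega_iff:
  "is_hom (PP Omega_omega) (Fp Omega_omega) (PP (Fp Omega_omega)) lift_p X \<alpha> kappa_omega h \<longleftrightarrow>
    h \<in> measurable X (prob_algebra Omega_omega) \<and>
    (\<forall>x\<in>space X. h x = distr (bind (\<alpha> x) (lift_p h)) Omega_omega psi_omega)"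
proof (rule is_hom_iff_fixpoint[OF measurable_PP measurable_prob_algebraD kappa_omega_def _
      measurable_phi_omega measurable_psi_omega psi_phi_omega phi_psi_omega measurable_emeasure_PP])
  show "kappa_omega \<in> measurable Omega_omega (PP (Fp Omega_omega))"
    by (simp add: measurable_PP measurable_kappa_omega)
  show "lift_p h \<in> measurable (Fp X) (PP (Fp Omega_omega)) \<and>
      lift_p h \<in> measurable (Fp X) (subprob_algebra (Fp Omega_omega))"
    if "h \<in> measurable X (prob_algebra Omega_omega)" for h
    using measurable_lift_p_prob[OF that] measurable_lift_p[OF measurable_prob_algebraD[OF that]]
    by (simp add: measurable_PP)
  show "sets (\<alpha> x) = sets (Fp X) \<and> space (\<alpha> x) \<noteq> {}" if "x \<in> space X" for x
    using prob_kernel_omega_at[OF that] by (simp add: prob_space.not_empty)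
qed

lemma emeasure_unfold_omega:
  assumes h: "h \<in> measurable X (prob_algebra Omega_omega)" and x: "x \<in> space X"
  shows "emeasure (distr (bind (\<alpha> x) (lift_p h)) Omega_omega psi_omega) (C_omega []) = 1"
    and "emeasure (distr (bind (\<alpha> x) (lift_p h)) Omega_omega psi_omega) (C_omega (a # v))
      = (\<integral>\<^sup>+ y. emeasure (h y) (C_omega v) \<partial>Pa_p X \<alpha> a x)"
proof -
  let ?B = "bind (\<alpha> x) (lift_p h)"
  have ax: "\<alpha> x \<in> space (prob_algebra (Fp X))" by (rule measurable_space[OF prob_kernel_omega x])
  have B: "prob_space ?B" "sets ?B = sets (Fp Omega_omega)"
    using prob_space_bind'[OF ax measurable_lift_p_prob[OF h]] sets_bind'[OF ax measurable_lift_p_prob[OF h]] .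
  have psi: "psi_omega \<in> measurable ?B Omega_omega"
    using measurable_psi_omega B(2) by (simp cong: measurable_cong_sets)
  have space: "space ?B = UNIV" using sets_eq_imp_space_eq[OF B(2)] by (simp add: space_Fp)
  show "emeasure (distr ?B Omega_omega psi_omega) (C_omega []) = 1"
    using prob_space.emeasure_space_1[OF B(1)] emeasure_distr[OF psi sets.top] by (simp add: space)
  have "emeasure (distr ?B Omega_omega psi_omega) (C_omega (a # v)) = emeasure ?B ({a} \<times> C_omega v)"
    by (simp add: emeasure_distr[OF psi] space vimage_psi_omega_C_omega_Cons)
  also have "\<dots> = (\<integral>\<^sup>+ y. emeasure (h y) (C_omega v) \<partial>Pa_p X \<alpha> a x)"
    using prob_kernel_omega_at[OF x] measurable_prob_algebraD[OF h]
    by (intro emeasure_bind_lift_p) (auto simp: prob_space.not_empty)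
  finally show "emeasure (distr ?B Omega_omega psi_omega) (C_omega (a # v))
      = (\<integral>\<^sup>+ y. emeasure (h y) (C_omega v) \<partial>Pa_p X \<alpha> a x)" .
qed

lemma is_hom_omega_emeasure:
  assumes hom: "is_hom (PP Omega_omega) (Fp Omega_omega) (PP (Fp Omega_omega)) lift_p X \<alpha> kappa_omega h"
    and x: "x \<in> space X"
  shows "emeasure (h x) (C_omega u) = tr_cyl_p X \<alpha> u x"
proof -
  from hom have h: "h \<in> measurable X (prob_algebra Omega_omega)"
    and fp: "\<And>x. x \<in> space X \<Longrightarrow> h x = distr (bind (\<alpha> x) (lift_p h)) Omega_omega psi_omega"
    by (auto simp: is_hom_omega_iff)
  show ?thesis using x
  proof (induction u arbitrary: x)
    case Nil then show ?case using emeasure_unfold_omega(1)[OF h] fp by simp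
  next
    case (Cons a v)
    have "emeasure (h x) (C_omega (a # v)) = (\<integral>\<^sup>+ y. emeasure (h y) (C_omega v) \<partial>Pa_p X \<alpha> a x)"
      using fp[OF Cons.prems] emeasure_unfold_omega(2)[OF h Cons.prems] by simp
    also have "\<dots> = tr_cyl_p X \<alpha> (a # v) x"
      by (simp only: tr_cyl_p.simps) (intro nn_integral_cong, simp add: Cons.IH)
    finally show ?case .
  qed
qed

lemma is_hom_omega_unique:
  assumes "is_hom (PP Omega_omega) (Fp Omega_omega) (PP (Fp Omega_omega)) lift_p X \<alpha> kappa_omega h"
    and "is_hom (PP Omega_omega) (Fp Omega_omega) (PP (Fp Omega_omega)) lift_p X \<alpha> kappa_omega h'"
  shows "\<forall>x\<in>space X. h x = h' x"
proof
  fix x assume x: "x \<in> space X"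
  have "h \<in> measurable X (prob_algebra Omega_omega)" "h' \<in> measurable X (prob_algebra Omega_omega)"
    using assms by (simp_all add: is_hom_omega_iff)
  then have "h x \<in> space (prob_algebra Omega_omega)" "h' x \<in> space (prob_algebra Omega_omega)"
    using x by (auto intro: measurable_space)
  then show "h x = h' x"
    using is_hom_omega_emeasure[OF assms(1) x] is_hom_omega_emeasure[OF assms(2) x]
    by (intro measure_Omega_omega_eqI) (auto simp: space_prob_algebra prob_space.finite_measure)
qed

lemma interval_code_exact_tr_cyl_p:
  assumes x: "x \<in> space X"
  shows "interval_code_exact (\<lambda>u. enn2real (tr_cyl_p X \<alpha> u x)) (\<lambda>_. 0)"
  using interval_code_enn2real(2)[of "\<lambda>u. tr_cyl_p X \<alpha> u x" "\<lambda>_. 0"]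
    sum_tr_cyl_p_snoc[OF measurable_prob_algebraD[OF prob_kernel_omega] _ x] prob_kernel_omega_at
  by simp

lemma emeasure_trace_omega:
  assumes x: "x \<in> space X" shows "emeasure (trace_omega X \<alpha> x) (C_omega u) = tr_cyl_p X \<alpha> u x"
proof -
  interpret interval_code_exact "\<lambda>u. enn2real (tr_cyl_p X \<alpha> u x)" "\<lambda>_. 0"
    by (rule interval_code_exact_tr_cyl_p[OF x])
  have "tr_cyl_p X \<alpha> u x \<le> 1"
    using enn_weights_le_1(1)[of "\<lambda>u. tr_cyl_p X \<alpha> u x" "\<lambda>_. 0"]
      sum_tr_cyl_p_snoc[OF measurable_prob_algebraD[OF prob_kernel_omega] _ x] prob_kernel_omega_at
    by simp
  then have "tr_cyl_p X \<alpha> u x \<noteq> \<top>" by (rule neq_top_trans[OF ennreal_one_neq_top])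
  then show ?thesis by (simp add: trace_omega_def emeasure_code_stream_measure ennreal_enn2real_if)
qed

lemma sets_trace_omega[simp]: "sets (trace_omega X \<alpha> x) = sets Omega_omega"
  by (simp add: trace_omega_def)

lemma prob_space_trace_omega: "x \<in> space X \<Longrightarrow> prob_space (trace_omega X \<alpha> x)"
  unfolding trace_omega_def
  by (rule interval_code_exact.prob_space_code_stream_measure[OF interval_code_exact_tr_cyl_p]) simp_all

lemma measurable_trace_omega: "trace_omega X \<alpha> \<in> measurable X (prob_algebra Omega_omega)"
proof (rule measurable_prob_algebra_generated[OF sets_Omega_omega Int_stable_S_omega])
  fix A :: "'a stream set" assume "A \<in> S_omega"
  then obtain u where "A = {} \<or> A = C_omega u" by (auto simp: S_omega_def)
  moreover have "(\<lambda>x. emeasure (trace_omega X \<alpha> x) (C_omega u)) \<in> borel_measurable X"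
    using borel_measurable_tr_cyl_p[OF measurable_prob_algebraD[OF prob_kernel_omega]]
    by (rule measurable_cong[THEN iffD1, rotated]) (simp add: emeasure_trace_omega)
  ultimately show "(\<lambda>x. emeasure (trace_omega X \<alpha> x) A) \<in> borel_measurable X" by auto
qed (auto simp: prob_space_trace_omega S_omega_def)

lemma is_hom_trace_omega:
  "is_hom (PP Omega_omega) (Fp Omega_omega) (PP (Fp Omega_omega)) lift_p X \<alpha> kappa_omega (trace_omega X \<alpha>)"
  unfolding is_hom_omega_iff
proof (intro conjI ballI measurable_trace_omega)
  fix x assume x: "x \<in> space X"
  show "trace_omega X \<alpha> x = distr (bind (\<alpha> x) (lift_p (trace_omega X \<alpha>))) Omega_omega psi_omega"
  proof (rule measure_Omega_omega_eqI)
    show "finite_measure (trace_omega X \<alpha> x)"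
      using prob_space_trace_omega[OF x] by (rule prob_space.finite_measure)
    fix u show "emeasure (trace_omega X \<alpha> x) (C_omega u)
        = emeasure (distr (bind (\<alpha> x) (lift_p (trace_omega X \<alpha>))) Omega_omega psi_omega) (C_omega u)"
    proof (cases u)
      case Nil then show ?thesis
        using emeasure_trace_omega[OF x, of "[]"] emeasure_unfold_omega(1)[OF measurable_trace_omega x] by simp
    next
      case (Cons a v) then show ?thesis
        using emeasure_trace_omega[OF x] emeasure_unfold_omega(2)[OF measurable_trace_omega x]
        by simp (intro nn_integral_cong, simp add: emeasure_trace_omega)
    qed
  qed simp_all
qed

end

subsection \<open>Type \<open>\<infinity>\<close>: probability measures on finite and infinite words\<close>

lemma measurable_kappa_inf:
  "kappa_inf \<in> measurable Omega_inf (prob_algebra (Fs Omega_inf :: ('a::finite \<times> 'a iword + unit) measure))"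
  unfolding kappa_inf_def[abs_def]
  by (rule measurable_compose[OF measurable_phi_inf measurable_return_prob_space])

definition trace_inf :: "'x measure \<Rightarrow> ('x \<Rightarrow> (('a::finite \<times> 'x) + unit) measure) \<Rightarrow> 'x \<Rightarrow> 'a iword measure" where
  "trace_inf X \<alpha> x = code_measure (\<lambda>u. enn2real (tr_cyl_s X \<alpha> u x)) (\<lambda>u. enn2real (tr_single X \<alpha> u x))"

lemma sets_trace_inf[simp]: "sets (trace_inf X \<alpha> x) = sets Omega_inf"
  by (simp add: trace_inf_def)

context
  fixes X :: "'x measure" and \<alpha> :: "'x \<Rightarrow> (('a::finite \<times> 'x) + unit) measure"
  assumes \<alpha>: "\<alpha> \<in> measurable X (PP (Fs X))"
begin

lemma prob_kernel_inf: "\<alpha> \<in> measurable X (prob_algebra (Fs X))"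
  using \<alpha> by (simp add: measurable_PP)

lemma prob_kernel_inf_at: "x \<in> space X \<Longrightarrow> prob_space (\<alpha> x) \<and> sets (\<alpha> x) = sets (Fs X)"
  using measurable_space[OF prob_kernel_inf] by (auto simp: space_prob_algebra)

lemma is_hom_inf_iff:
  "is_hom (PP Omega_inf) (Fs Omega_inf) (PP (Fs Omega_inf)) (lift_s Omega_inf) X \<alpha> kappa_inf h \<longleftrightarrow>
    h \<in> measurable X (prob_algebra Omega_inf) \<and>
    (\<forall>x\<in>space X. h x = distr (bind (\<alpha> x) (lift_s Omega_inf h)) Omega_inf psi_inf)"
proof (rule is_hom_iff_fixpoint[OF measurable_PP measurable_prob_algebraD kappa_inf_def _
      measurable_phi_inf measurable_psi_inf psi_phi_inf phi_psi_inf measurable_emeasure_PP])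
  show "kappa_inf \<in> measurable Omega_inf (PP (Fs Omega_inf))"
    by (simp add: measurable_PP measurable_kappa_inf)
  show "lift_s Omega_inf h \<in> measurable (Fs X) (PP (Fs Omega_inf)) \<and>
      lift_s Omega_inf h \<in> measurable (Fs X) (subprob_algebra (Fs Omega_inf))"
    if "h \<in> measurable X (prob_algebra Omega_inf)" for h
    using measurable_lift_s_prob[OF that] measurable_lift_s[OF measurable_prob_algebraD[OF that]]
    by (simp add: measurable_PP)
  show "sets (\<alpha> x) = sets (Fs X) \<and> space (\<alpha> x) \<noteq> {}" if "x \<in> space X" for x
    using prob_kernel_inf_at[OF that] by (simp add: prob_space.not_empty)
qed

lemma emeasure_unfold_inf:
  assumes h: "h \<in> measurable X (prob_algebra Omega_inf)" and x: "x \<in> space X"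
  defines "M \<equiv> distr (bind (\<alpha> x) (lift_s Omega_inf h)) Omega_inf psi_inf"
  shows "emeasure M (C_inf []) = 1"
    and "emeasure M (C_inf (a # v)) = (\<integral>\<^sup>+ y. emeasure (h y) (C_inf v) \<partial>Pa_s X \<alpha> a x)"
    and "emeasure M {Fin []} = emeasure (\<alpha> x) {Inr ()}"
    and "emeasure M {Fin (a # v)} = (\<integral>\<^sup>+ y. emeasure (h y) {Fin v} \<partial>Pa_s X \<alpha> a x)"
proof -
  let ?B = "bind (\<alpha> x) (lift_s Omega_inf h)"
  have ax: "\<alpha> x \<in> space (prob_algebra (Fs X))" by (rule measurable_space[OF prob_kernel_inf x])
  have B: "prob_space ?B" "sets ?B = sets (Fs Omega_inf)"
    using prob_space_bind'[OF ax measurable_lift_s_prob[OF h]] sets_bind'[OF ax measurable_lift_s_prob[OF h]] .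
  have psi: "psi_inf \<in> measurable ?B Omega_inf"
    using measurable_psi_inf B(2) by (simp cong: measurable_cong_sets)
  have space: "space ?B = UNIV" using sets_eq_imp_space_eq[OF B(2)] by (simp add: space_Fs_Omega_inf)
  have M: "emeasure M A = emeasure ?B (psi_inf -` A)" if "A \<in> sets Omega_inf" for A
    unfolding M_def using emeasure_distr[OF psi that] by (simp add: space)
  have ax': "sets (\<alpha> x) = sets (Fs X)" "space (\<alpha> x) \<noteq> {}"
    using prob_kernel_inf_at[OF x] by (simp_all add: prob_space.not_empty)
  note h' = measurable_prob_algebraD[OF h]
  show "emeasure M (C_inf []) = 1"
    using prob_space.emeasure_space_1[OF B(1)] M[OF C_inf_in_sets[of "[]"]] by (simp add: space)
  show "emeasure M (C_inf (a # v)) = (\<integral>\<^sup>+ y. emeasure (h y) (C_inf v) \<partial>Pa_s X \<alpha> a x)"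
    by (simp add: M vimage_psi_inf_C_inf_Cons emeasure_bind_lift_s_Inl[where \<alpha>=\<alpha> and x=x, OF ax' h'])
  show "emeasure M {Fin []} = emeasure (\<alpha> x) {Inr ()}"
    by (simp add: M vimage_psi_inf_Fin_Nil emeasure_bind_lift_s_Inr[where \<alpha>=\<alpha> and x=x, OF ax' h'])
  show "emeasure M {Fin (a # v)} = (\<integral>\<^sup>+ y. emeasure (h y) {Fin v} \<partial>Pa_s X \<alpha> a x)"
    using emeasure_bind_lift_s_Inl[where \<alpha>=\<alpha> and x=x, OF ax' h' Fin_in_sets[of v], of a]
    by (simp add: M vimage_psi_inf_Fin_Cons)
qed

lemma is_hom_inf_emeasure:
  assumes hom: "is_hom (PP Omega_inf) (Fs Omega_inf) (PP (Fs Omega_inf)) (lift_s Omega_inf) X \<alpha> kappa_inf h"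
    and x: "x \<in> space X"
  shows "emeasure (h x) {Fin u} = tr_single X \<alpha> u x" and "emeasure (h x) (C_inf u) = tr_cyl_s X \<alpha> u x"
proof -
  from hom have h: "h \<in> measurable X (prob_algebra Omega_inf)"
    and fp: "\<And>x. x \<in> space X \<Longrightarrow> h x = distr (bind (\<alpha> x) (lift_s Omega_inf h)) Omega_inf psi_inf"
    by (auto simp: is_hom_inf_iff)
  have "emeasure (h x) {Fin u} = tr_single X \<alpha> u x \<and> emeasure (h x) (C_inf u) = tr_cyl_s X \<alpha> u x"
    using x
  proof (induction u arbitrary: x)
    case Nil then show ?case using emeasure_unfold_inf(1,3)[OF h] fp by simp
  next
    case (Cons a v)
    have "emeasure (h x) {Fin (a # v)} = (\<integral>\<^sup>+ y. emeasure (h y) {Fin v} \<partial>Pa_s X \<alpha> a x)"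
      using fp[OF Cons.prems] emeasure_unfold_inf(4)[OF h Cons.prems] by simp
    also have "\<dots> = tr_single X \<alpha> (a # v) x"
      by (simp only: tr_single.simps) (intro nn_integral_cong, simp add: Cons.IH)
    moreover have "emeasure (h x) (C_inf (a # v)) = (\<integral>\<^sup>+ y. emeasure (h y) (C_inf v) \<partial>Pa_s X \<alpha> a x)"
      using fp[OF Cons.prems] emeasure_unfold_inf(2)[OF h Cons.prems] by simp
    moreover have "\<dots> = tr_cyl_s X \<alpha> (a # v) x"
      by (simp only: tr_cyl_s.simps) (intro nn_integral_cong, simp add: Cons.IH)
    ultimately show ?case by simp
  qed
  then show "emeasure (h x) {Fin u} = tr_single X \<alpha> u x" "emeasure (h x) (C_inf u) = tr_cyl_s X \<alpha> u x"
    by simp_all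
qed

lemma is_hom_inf_unique:
  assumes "is_hom (PP Omega_inf) (Fs Omega_inf) (PP (Fs Omega_inf)) (lift_s Omega_inf) X \<alpha> kappa_inf h"
    and "is_hom (PP Omega_inf) (Fs Omega_inf) (PP (Fs Omega_inf)) (lift_s Omega_inf) X \<alpha> kappa_inf h'"
  shows "\<forall>x\<in>space X. h x = h' x"
proof
  fix x assume x: "x \<in> space X"
  have "h \<in> measurable X (prob_algebra Omega_inf)" "h' \<in> measurable X (prob_algebra Omega_inf)"
    using assms by (simp_all add: is_hom_inf_iff)
  then have "h x \<in> space (prob_algebra Omega_inf)" "h' x \<in> space (prob_algebra Omega_inf)"
    using x by (auto intro: measurable_space)
  then show "h x = h' x"
    using is_hom_inf_emeasure[OF assms(1) x] is_hom_inf_emeasure[OF assms(2) x]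
    by (intro measure_Omega_inf_eqI) (auto simp: space_prob_algebra prob_space.finite_measure)
qed

lemma tr_cyl_s_weights:
  assumes x: "x \<in> space X"
  shows "tr_single X \<alpha> u x + (\<Sum>b\<in>UNIV. tr_cyl_s X \<alpha> (u @ [b]) x) = tr_cyl_s X \<alpha> u x"
    and "tr_cyl_s X \<alpha> u x \<noteq> \<top>" "tr_single X \<alpha> u x \<noteq> \<top>"
proof -
  have split: "tr_single X \<alpha> u x + (\<Sum>b\<in>UNIV. tr_cyl_s X \<alpha> (u @ [b]) x) = tr_cyl_s X \<alpha> u x" for u
    using tr_single_plus_sum_tr_cyl_s_eq[OF measurable_prob_algebraD[OF prob_kernel_inf]] prob_kernel_inf_at x
    by blast
  then show "tr_single X \<alpha> u x + (\<Sum>b\<in>UNIV. tr_cyl_s X \<alpha> (u @ [b]) x) = tr_cyl_s X \<alpha> u x" .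
  have "tr_cyl_s X \<alpha> u x \<le> 1" "tr_single X \<alpha> u x \<le> 1"
    using enn_weights_le_1[of "\<lambda>u. tr_cyl_s X \<alpha> u x" "\<lambda>u. tr_single X \<alpha> u x"] split by simp_all
  then show "tr_cyl_s X \<alpha> u x \<noteq> \<top>" "tr_single X \<alpha> u x \<noteq> \<top>"
    by (simp_all add: neq_top_trans[OF ennreal_one_neq_top])
qed

lemma interval_code_exact_tr_cyl_s:
  "x \<in> space X \<Longrightarrow>
    interval_code_exact (\<lambda>u. enn2real (tr_cyl_s X \<alpha> u x)) (\<lambda>u. enn2real (tr_single X \<alpha> u x))"
  by (rule interval_code_enn2real(2)) (simp_all add: tr_cyl_s_weights)

lemma emeasure_trace_inf:
  assumes x: "x \<in> space X"
  shows "emeasure (trace_inf X \<alpha> x) {Fin u} = tr_single X \<alpha> u x"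
    and "emeasure (trace_inf X \<alpha> x) (C_inf u) = tr_cyl_s X \<alpha> u x"
proof -
  interpret interval_code_exact "\<lambda>u. enn2real (tr_cyl_s X \<alpha> u x)" "\<lambda>u. enn2real (tr_single X \<alpha> u x)"
    by (rule interval_code_exact_tr_cyl_s[OF x])
  show "emeasure (trace_inf X \<alpha> x) {Fin u} = tr_single X \<alpha> u x"
    "emeasure (trace_inf X \<alpha> x) (C_inf u) = tr_cyl_s X \<alpha> u x"
    using tr_cyl_s_weights[OF x]
    by (simp_all add: trace_inf_def emeasure_code_measure_Fin emeasure_code_measure_C_inf ennreal_enn2real_if)
qed

lemma prob_space_trace_inf: "x \<in> space X \<Longrightarrow> prob_space (trace_inf X \<alpha> x)"
  unfolding trace_inf_def
  by (rule interval_code_exact.prob_space_code_measure[OF interval_code_exact_tr_cyl_s])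

lemma measurable_trace_inf: "trace_inf X \<alpha> \<in> measurable X (prob_algebra Omega_inf)"
proof (rule measurable_prob_algebra_generated[OF sets_Omega_inf Int_stable_S_inf])
  note \<alpha>' = measurable_prob_algebraD[OF prob_kernel_inf]
  fix A :: "'a iword set" assume "A \<in> S_inf"
  then consider "A = {}" | u where "A = {Fin u}" | u where "A = C_inf u" by (auto simp: S_inf_def)
  then show "(\<lambda>x. emeasure (trace_inf X \<alpha> x) A) \<in> borel_measurable X"
  proof cases
    case (2 u) show ?thesis
      unfolding 2 using borel_measurable_tr_single[OF \<alpha>']
      by (rule measurable_cong[THEN iffD1, rotated]) (simp_all add: emeasure_trace_inf)
  next
    case (3 u) show ?thesis
      unfolding 3 using borel_measurable_tr_cyl_s[OF \<alpha>']
      by (rule measurable_cong[THEN iffD1, rotated]) (simp_all add: emeasure_trace_inf)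
  qed simp
qed (auto simp: prob_space_trace_inf S_inf_def)

lemma is_hom_trace_inf:
  "is_hom (PP Omega_inf) (Fs Omega_inf) (PP (Fs Omega_inf)) (lift_s Omega_inf) X \<alpha> kappa_inf (trace_inf X \<alpha>)"
  unfolding is_hom_inf_iff
proof (intro conjI ballI measurable_trace_inf)
  fix x assume x: "x \<in> space X"
  note unfold = emeasure_unfold_inf[OF measurable_trace_inf x]
  show "trace_inf X \<alpha> x = distr (bind (\<alpha> x) (lift_s Omega_inf (trace_inf X \<alpha>))) Omega_inf psi_inf"
  proof (rule measure_Omega_inf_eqI)
    show "finite_measure (trace_inf X \<alpha> x)"
      using prob_space_trace_inf[OF x] by (rule prob_space.finite_measure)
  next
    fix u show "emeasure (trace_inf X \<alpha> x) (C_inf u)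
        = emeasure (distr (bind (\<alpha> x) (lift_s Omega_inf (trace_inf X \<alpha>))) Omega_inf psi_inf) (C_inf u)"
    proof (cases u)
      case Nil then show ?thesis using emeasure_trace_inf(2)[OF x, of "[]"] unfold(1) by simp
    next
      case (Cons a v) then show ?thesis
        using emeasure_trace_inf(2)[OF x] unfold(2)
        by simp (intro nn_integral_cong, simp add: emeasure_trace_inf)
    qed
  next
    fix u show "emeasure (trace_inf X \<alpha> x) {Fin u}
        = emeasure (distr (bind (\<alpha> x) (lift_s Omega_inf (trace_inf X \<alpha>))) Omega_inf psi_inf) {Fin u}"
    proof (cases u)
      case Nil then show ?thesis using emeasure_trace_inf(1)[OF x, of "[]"] unfold(3) by simp
    next
      case (Cons a v) then show ?thesis
        using emeasure_trace_inf(1)[OF x] unfold(4)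
        by simp (intro nn_integral_cong, simp add: emeasure_trace_inf)
    qed
  qed simp_all
qed

end

subsection \<open>Type \<open>*\<close>: sub-probability measures on finite words\<close>

lemma SP_Omega_star: "SP Omega_star = subprob_algebra Omega_star"
  by (rule SP_eq_subprob_algebra) simp

lemma measurable_kappa_star:
  "kappa_star \<in> measurable Omega_star (subprob_algebra (Fs Omega_star :: ('a::finite \<times> 'a list + unit) measure))"
  unfolding kappa_star_def[abs_def] by (rule measurable_compose[OF measurable_phi_star return_measurable])

definition trace_star :: "'x measure \<Rightarrow> ('x \<Rightarrow> (('a::finite \<times> 'x) + unit) measure) \<Rightarrow> 'x \<Rightarrow> 'a list measure" where
  "trace_star X \<alpha> x = code_word_measure (\<lambda>u. enn2real (tr_cyl_s X \<alpha> u x)) (\<lambda>u. enn2real (tr_single X \<alpha> u x))"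

lemma sets_trace_star[simp]: "sets (trace_star X \<alpha> x) = sets Omega_star"
  by (simp add: trace_star_def)

context
  fixes X :: "'x measure" and \<alpha> :: "'x \<Rightarrow> (('a::finite \<times> 'x) + unit) measure"
  assumes \<alpha>: "\<alpha> \<in> measurable X (SP (Fs X))"
begin

lemma subprob_kernel_star: "\<alpha> \<in> measurable X (subprob_algebra (Fs X))"
  using \<alpha> by (simp add: SP_Fs)

lemma subprob_kernel_star_at: "x \<in> space X \<Longrightarrow> sets (\<alpha> x) = sets (Fs X) \<and> space (\<alpha> x) \<noteq> {}"
  by (simp add: sets_kernel[OF subprob_kernel_star] subprob_space.subprob_not_empty
      subprob_space_kernel[OF subprob_kernel_star])

lemma is_hom_star_iff:
  "is_hom (SP Omega_star) (Fs Omega_star) (SP (Fs Omega_star)) (lift_s Omega_star) X \<alpha> kappa_star h \<longleftrightarrow>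
    h \<in> measurable X (subprob_algebra Omega_star) \<and>
    (\<forall>x\<in>space X. h x = distr (bind (\<alpha> x) (lift_s Omega_star h)) Omega_star psi_star)"
  unfolding SP_Omega_star SP_Fs
  by (rule is_hom_iff_fixpoint[OF refl _ kappa_star_def measurable_kappa_star measurable_phi_star
        measurable_psi_star psi_phi_star phi_psi_star measurable_emeasure_subprob_algebra])
     (simp_all add: measurable_lift_s subprob_kernel_star_at)

lemma emeasure_unfold_star:
  assumes h: "h \<in> measurable X (subprob_algebra Omega_star)" and x: "x \<in> space X"
  defines "M \<equiv> distr (bind (\<alpha> x) (lift_s Omega_star h)) Omega_star psi_star"
  shows "emeasure M {[]} = emeasure (\<alpha> x) {Inr ()}"
    and "emeasure M {a # v} = (\<integral>\<^sup>+ y. emeasure (h y) {v} \<partial>Pa_s X \<alpha> a x)"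
proof -
  let ?B = "bind (\<alpha> x) (lift_s Omega_star h)"
  have ax: "sets (\<alpha> x) = sets (Fs X)" "space (\<alpha> x) \<noteq> {}" using subprob_kernel_star_at[OF x] by simp_all
  have "lift_s Omega_star h \<in> measurable (\<alpha> x) (subprob_algebra (Fs Omega_star))"
    using measurable_lift_s[OF h] ax(1) by (simp cong: measurable_cong_sets)
  then have B: "sets ?B = sets (Fs Omega_star)" using ax(2) by (rule sets_bind_measurable)
  have psi: "psi_star \<in> measurable ?B Omega_star"
    using measurable_psi_star B by (simp cong: measurable_cong_sets)
  have space: "space ?B = UNIV" using sets_eq_imp_space_eq[OF B] by (simp add: space_Fs_Omega_star)
  have M: "emeasure M {u} = emeasure ?B (psi_star -` {u})" for u
    unfolding M_def using emeasure_distr[OF psi singleton_in_sets_Omega_star] by (simp add: space)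
  show "emeasure M {[]} = emeasure (\<alpha> x) {Inr ()}"
    by (simp add: M vimage_psi_star_Nil emeasure_bind_lift_s_Inr[where \<alpha>=\<alpha> and x=x, OF ax h])
  show "emeasure M {a # v} = (\<integral>\<^sup>+ y. emeasure (h y) {v} \<partial>Pa_s X \<alpha> a x)"
    using emeasure_bind_lift_s_Inl[where \<alpha>=\<alpha> and x=x, OF ax h singleton_in_sets_Omega_star[of v], of a]
    by (simp add: M vimage_psi_star_Cons)
qed

lemma is_hom_star_emeasure:
  assumes hom: "is_hom (SP Omega_star) (Fs Omega_star) (SP (Fs Omega_star)) (lift_s Omega_star) X \<alpha> kappa_star h"
    and x: "x \<in> space X"
  shows "emeasure (h x) {u} = tr_single X \<alpha> u x"
proof -
  from hom have h: "h \<in> measurable X (subprob_algebra Omega_star)"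
    and fp: "\<And>x. x \<in> space X \<Longrightarrow> h x = distr (bind (\<alpha> x) (lift_s Omega_star h)) Omega_star psi_star"
    by (auto simp: is_hom_star_iff)
  show ?thesis using x
  proof (induction u arbitrary: x)
    case Nil then show ?case using emeasure_unfold_star(1)[OF h] fp by simp
  next
    case (Cons a v)
    have "emeasure (h x) {a # v} = (\<integral>\<^sup>+ y. emeasure (h y) {v} \<partial>Pa_s X \<alpha> a x)"
      using fp[OF Cons.prems] emeasure_unfold_star(2)[OF h Cons.prems] by simp
    also have "\<dots> = tr_single X \<alpha> (a # v) x"
      by (simp only: tr_single.simps) (intro nn_integral_cong, simp add: Cons.IH)
    finally show ?case .
  qed
qed

lemma is_hom_star_unique:
  assumes "is_hom (SP Omega_star) (Fs Omega_star) (SP (Fs Omega_star)) (lift_s Omega_star) X \<alpha> kappa_star h"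
    and "is_hom (SP Omega_star) (Fs Omega_star) (SP (Fs Omega_star)) (lift_s Omega_star) X \<alpha> kappa_star h'"
  shows "\<forall>x\<in>space X. h x = h' x"
proof
  fix x assume x: "x \<in> space X"
  have "h \<in> measurable X (subprob_algebra Omega_star)" "h' \<in> measurable X (subprob_algebra Omega_star)"
    using assms by (simp_all add: is_hom_star_iff)
  then show "h x = h' x"
    using is_hom_star_emeasure[OF assms(1) x] is_hom_star_emeasure[OF assms(2) x]
    by (intro measure_Omega_star_eqI) (simp_all add: sets_kernel x)
qed

lemma tr_single_weights:
  assumes x: "x \<in> space X"
  shows "tr_single X \<alpha> u x + (\<Sum>b\<in>UNIV. tr_cyl_s X \<alpha> (u @ [b]) x) \<le> tr_cyl_s X \<alpha> u x"
    and "tr_single X \<alpha> u x \<noteq> \<top>"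
proof -
  note split = tr_single_plus_sum_tr_cyl_s_le[OF subprob_kernel_star x]
  then show "tr_single X \<alpha> u x + (\<Sum>b\<in>UNIV. tr_cyl_s X \<alpha> (u @ [b]) x) \<le> tr_cyl_s X \<alpha> u x" .
  have "tr_single X \<alpha> u x \<le> 1"
    using enn_weights_le_1(2)[of "\<lambda>u. tr_cyl_s X \<alpha> u x" "\<lambda>u. tr_single X \<alpha> u x"] split by simp
  then show "tr_single X \<alpha> u x \<noteq> \<top>" by (simp add: neq_top_trans[OF ennreal_one_neq_top])
qed

lemma interval_code_tr_single:
  "x \<in> space X \<Longrightarrow> interval_code (\<lambda>u. enn2real (tr_cyl_s X \<alpha> u x)) (\<lambda>u. enn2real (tr_single X \<alpha> u x))"
  by (rule interval_code_enn2real(1)) (simp_all add: tr_single_weights)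

lemma emeasure_trace_star: "x \<in> space X \<Longrightarrow> emeasure (trace_star X \<alpha> x) {u} = tr_single X \<alpha> u x"
  unfolding trace_star_def
  by (simp add: interval_code.emeasure_code_word_measure[OF interval_code_tr_single] tr_single_weights
      ennreal_enn2real_if)

lemma measurable_trace_star: "trace_star X \<alpha> \<in> measurable X (subprob_algebra Omega_star)"
proof (rule measurable_subprob_algebra_generated[OF sets_Omega_star Int_stable_S_star])
  note \<alpha>' = subprob_kernel_star
  fix x assume "x \<in> space X"
  then show "subprob_space (trace_star X \<alpha> x)"
    unfolding trace_star_def by (rule interval_code.subprob_space_code_word_measure[OF interval_code_tr_single])
next
  fix A :: "'a list set" assume "A \<in> S_star"
  then consider "A = {}" | u where "A = {u}" by (auto simp: S_star_def)
  then show "(\<lambda>x. emeasure (trace_star X \<alpha> x) A) \<in> borel_measurable X"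
  proof cases
    case (2 u) show ?thesis
      unfolding 2 using borel_measurable_tr_single[OF subprob_kernel_star]
      by (rule measurable_cong[THEN iffD1, rotated]) (simp_all add: emeasure_trace_star)
  qed simp
next
  interpret count: sigma_finite_measure "count_space (UNIV :: 'a list set)"
    by (rule sigma_finite_measure_count_space_countable) simp
  have "(\<lambda>p. tr_single X \<alpha> (snd p) (fst p)) \<in> borel_measurable (X \<Otimes>\<^sub>M count_space UNIV)"
    by (rule measurable_compose_countable[where f="\<lambda>u p. tr_single X \<alpha> u (fst p)" and g=snd])
       (auto intro: measurable_compose[OF measurable_fst borel_measurable_tr_single[OF subprob_kernel_star]])
  then have "(\<lambda>x. \<integral>\<^sup>+ u. tr_single X \<alpha> u x \<partial>count_space UNIV) \<in> borel_measurable X"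
    by (intro count.borel_measurable_nn_integral) (simp add: case_prod_beta')
  moreover have "(\<integral>\<^sup>+ u. tr_single X \<alpha> u x \<partial>count_space UNIV) = emeasure (trace_star X \<alpha> x) UNIV"
    if x: "x \<in> space X" for x
    by (subst emeasure_countable_singleton) (simp_all add: emeasure_trace_star[OF x])
  ultimately show "(\<lambda>x. emeasure (trace_star X \<alpha> x) UNIV) \<in> borel_measurable X"
    by (rule measurable_cong[THEN iffD1, rotated]) simp
qed (auto simp: S_star_def)

lemma is_hom_trace_star:
  "is_hom (SP Omega_star) (Fs Omega_star) (SP (Fs Omega_star)) (lift_s Omega_star) X \<alpha> kappa_star (trace_star X \<alpha>)"
  unfolding is_hom_star_iff
proof (intro conjI ballI measurable_trace_star)
  fix x assume x: "x \<in> space X"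
  note unfold = emeasure_unfold_star[OF measurable_trace_star x]
  show "trace_star X \<alpha> x = distr (bind (\<alpha> x) (lift_s Omega_star (trace_star X \<alpha>))) Omega_star psi_star"
  proof (rule measure_Omega_star_eqI)
    fix u show "emeasure (trace_star X \<alpha> x) {u}
        = emeasure (distr (bind (\<alpha> x) (lift_s Omega_star (trace_star X \<alpha>))) Omega_star psi_star) {u}"
    proof (cases u)
      case Nil then show ?thesis using emeasure_trace_star[OF x, of "[]"] unfold(1) by simp
    next
      case (Cons a v) then show ?thesis
        using emeasure_trace_star[OF x] unfold(2)
        by simp (intro nn_integral_cong, simp add: emeasure_trace_star)
    qed
  qed simp_all
qed

end

subsection \<open>Type 0: the empty final coalgebra\<close>

lemma space_Omega0[simp]: "space Omega0 = {}"
  unfolding Omega0_def by (simp add: space_measure_of_conv)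

lemma measurable_kappa0: "kappa0 \<in> measurable Omega0 (SP (Fp Omega0))"
  unfolding measurable_def by simp

lemma measure_eq_if_space_empty:
  assumes "sets M = sets N" "space M = {}" shows "M = N"
proof (rule measure_eqI)
  fix A assume "A \<in> sets M"
  then have "A = {}" using sets.sets_into_space[of A M] assms(2) by auto
  then show "emeasure M A = emeasure N A" by simp
qed (rule assms(1))

lemma is_hom0_null_measure:
  "is_hom (SP Omega0) (Fp Omega0) (SP (Fp Omega0)) lift_p X \<alpha> kappa0 (\<lambda>_. null_measure Omega0)"
proof -
  have "null_measure Omega0 \<in> space (SP Omega0)" by (simp add: space_SP)
  moreover have "kcomp T (Fp Omega0) f g x = kcomp T (Fp Omega0) f' g' x" for T f g f' g' x
    unfolding kcomp_def kmu_def
    by (rule measure_eq_if_space_empty) (simp_all add: sets_measure_of_conv space_measure_of_conv space_Fp)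
  ultimately show ?thesis by (auto simp: is_hom_def)
qed

lemma is_hom0_unique:
  assumes "is_hom (SP Omega0) (Fp Omega0) (SP (Fp Omega0)) lift_p X \<alpha> kappa0 h"
    and "is_hom (SP Omega0) (Fp Omega0) (SP (Fp Omega0)) lift_p X \<alpha> kappa0 h'"
  shows "\<forall>x\<in>space X. h x = h' x"
proof
  fix x assume "x \<in> space X"
  then have "h x \<in> space (SP Omega0)" "h' x \<in> space (SP Omega0)"
    using assms by (auto simp: is_hom_def intro: measurable_space)
  then have "sets (h x) = sets Omega0" "sets (h' x) = sets Omega0" by (simp_all add: space_SP)
  then show "h x = h' x"
    by (intro measure_eq_if_space_empty) (simp_all add: sets_eq_imp_space_eq[of "h x" Omega0])
qed

theorem mainTheorem1:
  fixes X :: "'x measure"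
    and \<alpha>0 :: "'x \<Rightarrow> ('a::finite \<times> 'x) measure"
    and \<alpha>s :: "'x \<Rightarrow> (('a \<times> 'x) + unit) measure"
    and \<alpha>w :: "'x \<Rightarrow> ('a \<times> 'x) measure"
    and \<alpha>i :: "'x \<Rightarrow> (('a \<times> 'x) + unit) measure"
  shows
    \<comment> \<open>type 0\<close>
    "(kappa0 \<in> measurable Omega0 (SP (Fp Omega0 :: ('a \<times> unit) measure)) \<and>
      (\<alpha>0 \<in> measurable X (SP (Fp X)) \<longrightarrow>
        (\<exists>h. is_hom (SP Omega0) (Fp Omega0) (SP (Fp Omega0)) lift_p X \<alpha>0 kappa0 h) \<and>
        (\<forall>h h'. is_hom (SP Omega0) (Fp Omega0) (SP (Fp Omega0)) lift_p X \<alpha>0 kappa0 h \<and>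
                is_hom (SP Omega0) (Fp Omega0) (SP (Fp Omega0)) lift_p X \<alpha>0 kappa0 h'
                \<longrightarrow> (\<forall>x\<in>space X. h x = h' x)))) \<and>
    \<comment> \<open>type *\<close>
     (kappa_star \<in> measurable Omega_star (SP (Fs Omega_star :: (('a \<times> 'a list) + unit) measure)) \<and>
      (\<alpha>s \<in> measurable X (SP (Fs X)) \<longrightarrow>
        (\<exists>h. is_hom (SP Omega_star) (Fs Omega_star) (SP (Fs Omega_star)) (lift_s Omega_star) X \<alpha>s kappa_star h) \<and>
        (\<forall>h h'. is_hom (SP Omega_star) (Fs Omega_star) (SP (Fs Omega_star)) (lift_s Omega_star) X \<alpha>s kappa_star h \<and>
                is_hom (SP Omega_star) (Fs Omega_star) (SP (Fs Omega_star)) (lift_s Omega_star) X \<alpha>s kappa_star h'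
                \<longrightarrow> (\<forall>x\<in>space X. h x = h' x)) \<and>
        (\<forall>h. is_hom (SP Omega_star) (Fs Omega_star) (SP (Fs Omega_star)) (lift_s Omega_star) X \<alpha>s kappa_star h
              \<longrightarrow> (\<forall>x\<in>space X. \<forall>u. emeasure (h x) {u} = tr_single X \<alpha>s u x)))) \<and>
    \<comment> \<open>type omega\<close>
     (kappa_omega \<in> measurable Omega_omega (PP (Fp Omega_omega :: ('a \<times> 'a stream) measure)) \<and>
      (\<alpha>w \<in> measurable X (PP (Fp X)) \<longrightarrow>
        (\<exists>h. is_hom (PP Omega_omega) (Fp Omega_omega) (PP (Fp Omega_omega)) lift_p X \<alpha>w kappa_omega h) \<and>
        (\<forall>h h'. is_hom (PP Omega_omega) (Fp Omega_omega) (PP (Fp Omega_omega)) lift_p X \<alpha>w kappa_omega h \<and>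
                is_hom (PP Omega_omega) (Fp Omega_omega) (PP (Fp Omega_omega)) lift_p X \<alpha>w kappa_omega h'
                \<longrightarrow> (\<forall>x\<in>space X. h x = h' x)) \<and>
        (\<forall>h. is_hom (PP Omega_omega) (Fp Omega_omega) (PP (Fp Omega_omega)) lift_p X \<alpha>w kappa_omega h
              \<longrightarrow> (\<forall>x\<in>space X. \<forall>u. emeasure (h x) (C_omega u) = tr_cyl_p X \<alpha>w u x)))) \<and>
    \<comment> \<open>type infinity\<close>
     (kappa_inf \<in> measurable Omega_inf (PP (Fs Omega_inf :: (('a \<times> 'a iword) + unit) measure)) \<and>
      (\<alpha>i \<in> measurable X (PP (Fs X)) \<longrightarrow>
        (\<exists>h. is_hom (PP Omega_inf) (Fs Omega_inf) (PP (Fs Omega_inf)) (lift_s Omega_inf) X \<alpha>i kappa_inf h) \<and>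
        (\<forall>h h'. is_hom (PP Omega_inf) (Fs Omega_inf) (PP (Fs Omega_inf)) (lift_s Omega_inf) X \<alpha>i kappa_inf h \<and>
                is_hom (PP Omega_inf) (Fs Omega_inf) (PP (Fs Omega_inf)) (lift_s Omega_inf) X \<alpha>i kappa_inf h'
                \<longrightarrow> (\<forall>x\<in>space X. h x = h' x)) \<and>
        (\<forall>h. is_hom (PP Omega_inf) (Fs Omega_inf) (PP (Fs Omega_inf)) (lift_s Omega_inf) X \<alpha>i kappa_inf h
              \<longrightarrow> (\<forall>x\<in>space X. (\<forall>u. emeasure (h x) {Fin u} = tr_single X \<alpha>i u x) \<and>
                                 (\<forall>u. emeasure (h x) (C_inf u) = tr_cyl_s X \<alpha>i u x)))))"
  by (auto simp: measurable_kappa0 measurable_kappa_star[folded SP_Fs] measurable_kappa_omega[folded measurable_PP]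
      measurable_kappa_inf[folded measurable_PP] is_hom_star_emeasure is_hom_omega_emeasure is_hom_inf_emeasure
      intro: is_hom0_null_measure is_hom_trace_star is_hom_trace_omega is_hom_trace_inf
      dest: is_hom0_unique is_hom_star_unique is_hom_omega_unique is_hom_inf_unique)


end
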